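(* Let $\Phi_1,\Phi_2:\ell^\infty\to\mathcal{B}(H)$ be two strongly continuous, unital $*$-homomorphisms such that $\Phi_1[c_0],\Phi_2[c_0]\subseteq\mathcal{K}(H)$. Suppose there exist two partial isometries of finite index $v_1,v_2\in\mathcal{B}(H)$ such that $v_1\Phi_1(a)v_1^*-v_2\Phi_2(a)v_2^*\in\mathcal{K}(H)$ for all $a\in\ell^\infty$. Then the sequences $\{\mathrm{rk}(\Phi_1(P_k))\}_{k\in\mathbb{N}}$ and $\{\mathrm{rk}(\Phi_2(P_k))\}_{k\in\mathbb{N}}$ are eventually equal.
   Context: $H$ is a separable infinite-dimensional complex Hilbert space with a fixed orthonormal basis $\{\xi_k\}_{k\in\mathbb{N}}$; $\ell^\infty$ is identified with the algebra of operators diagonal with respect to this basis, and $c_0=\ell^\infty\cap\mathcal{K}(H)$. $P_k$ is the orthogonal projection onto $\mathbb{C}\xi_k$. A partial isometry of finite index is a Fredholm partial isometry, i.e. a partial isometry $v$ with $1-v^*v$ and $1-vv^*$ of finite rank. Strongly continuous means continuous for the strong operator topology on domain and codomain. *)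

theory Defs
  imports Complex_Main
begin

text \<open>H is modelled concretely as l2(N) with orthonormal basis xi_k = the k-th unit sequence.
Operators are maps on sequences which vanish outside l2.\<close>

type_synonym vec = "nat \<Rightarrow> complex"
type_synonym op = "vec \<Rightarrow> vec"

definition l2 :: "vec set" where
  "l2 = {x. summable (\<lambda>n. (cmod (x n))\<^sup>2)}"

definition l2norm :: "vec \<Rightarrow> real" where
  "l2norm x = sqrt (\<Sum>n. (cmod (x n))\<^sup>2)"

definition l2inner :: "vec \<Rightarrow> vec \<Rightarrow> complex" where
  "l2inner x y = (\<Sum>n. cnj (x n) * y n)"

definition bop :: "op \<Rightarrow> bool" where
  "bop T \<longleftrightarrow> (\<forall>x\<in>l2. T x \<in> l2) \<and> (\<forall>x. x \<notin> l2 \<longrightarrow> T x = (\<lambda>_. 0))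
     \<and> (\<forall>x\<in>l2. \<forall>y\<in>l2. T (\<lambda>n. x n + y n) = (\<lambda>n. T x n + T y n))
     \<and> (\<forall>x\<in>l2. \<forall>c. T (\<lambda>n. c * x n) = (\<lambda>n. c * T x n))
     \<and> (\<exists>C. \<forall>x\<in>l2. l2norm (T x) \<le> C * l2norm x)"

definition adj :: "op \<Rightarrow> op" where
  "adj T = (THE S. bop S \<and> (\<forall>x\<in>l2. \<forall>y\<in>l2. l2inner (T x) y = l2inner x (S y)))"

definition ident :: op where
  "ident x = (if x \<in> l2 then x else (\<lambda>_. 0))"

definition opminus :: "op \<Rightarrow> op \<Rightarrow> op" where
  "opminus T S = (\<lambda>x n. T x n - S x n)"

definition cspan :: "vec set \<Rightarrow> vec set" where
  "cspan F = {x. \<exists>c. x = (\<lambda>n. \<Sum>v\<in>F. c v * v n)}"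

definition finite_rank :: "op \<Rightarrow> bool" where
  "finite_rank T \<longleftrightarrow> (\<exists>F. finite F \<and> F \<subseteq> l2 \<and> T ` l2 \<subseteq> cspan F)"

text \<open>Rank = dimension of the range (meaningful for finite-rank operators).\<close>
definition rk :: "op \<Rightarrow> nat" where
  "rk T = (LEAST n. \<exists>F. finite F \<and> card F = n \<and> F \<subseteq> l2 \<and> T ` l2 \<subseteq> cspan F)"

definition compact_op :: "op \<Rightarrow> bool" where
  "compact_op T \<longleftrightarrow> (\<forall>e>0. \<exists>F. bop F \<and> finite_rank F \<and>
      (\<forall>x\<in>l2. l2norm (T x - F x) \<le> e * l2norm x))"

definition partial_isometry :: "op \<Rightarrow> bool" where
  "partial_isometry v \<longleftrightarrow> bop v \<and> v \<circ> adj v \<circ> v = v"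

definition finite_index_pi :: "op \<Rightarrow> bool" where
  "finite_index_pi v \<longleftrightarrow> partial_isometry v \<and>
     finite_rank (opminus ident (adj v \<circ> v)) \<and> finite_rank (opminus ident (v \<circ> adj v))"

definition linf :: "vec set" where
  "linf = {a. \<exists>B. \<forall>n. cmod (a n) \<le> B}"

definition c0 :: "vec set" where
  "c0 = {a. a \<longlonglongrightarrow> 0}"

text \<open>Diagonal operator of a sequence (the identification of l-infinity with diagonal operators).\<close>
definition diag :: "vec \<Rightarrow> op" where
  "diag a x = (if x \<in> l2 then (\<lambda>n. a n * x n) else (\<lambda>_. 0))"

definition Pk :: "nat \<Rightarrow> vec" where
  "Pk k = (\<lambda>n. if n = k then 1 else 0)"

definition unital_star_hom :: "(vec \<Rightarrow> op) \<Rightarrow> bool" where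
  "unital_star_hom \<Phi> \<longleftrightarrow>
     (\<forall>a\<in>linf. bop (\<Phi> a))
   \<and> (\<forall>a\<in>linf. \<forall>b\<in>linf. \<Phi> (\<lambda>n. a n + b n) = (\<lambda>x n. \<Phi> a x n + \<Phi> b x n))
   \<and> (\<forall>a\<in>linf. \<forall>c. \<Phi> (\<lambda>n. c * a n) = (\<lambda>x n. c * \<Phi> a x n))
   \<and> (\<forall>a\<in>linf. \<forall>b\<in>linf. \<Phi> (\<lambda>n. a n * b n) = \<Phi> a \<circ> \<Phi> b)
   \<and> (\<forall>a\<in>linf. \<Phi> (\<lambda>n. cnj (a n)) = adj (\<Phi> a))
   \<and> \<Phi> (\<lambda>_. 1) = ident"

text \<open>Continuity for the strong operator topologies (l-infinity carrying the SOT of diagonal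
operators), phrased via convergence along arbitrary filters (nets).\<close>
definition strongly_continuous :: "(vec \<Rightarrow> op) \<Rightarrow> bool" where
  "strongly_continuous \<Phi> \<longleftrightarrow> (\<forall>a0\<in>linf. \<forall>F. F \<le> principal linf \<longrightarrow>
     (\<forall>x\<in>l2. ((\<lambda>a. l2norm (\<lambda>n. diag a x n - diag a0 x n)) \<longlongrightarrow> 0) F) \<longrightarrow>
     (\<forall>x\<in>l2. ((\<lambda>a. l2norm (\<lambda>n. \<Phi> a x n - \<Phi> a0 x n)) \<longlongrightarrow> 0) F))"

end

theory Submission
  imports Defs "HOL-Analysis.L2_Norm" "HOL-Library.Function_Algebras"
begin

text \<open>
  Suppose \<open>rk (\<Phi>\<^sub>2 P\<^sub>k) > rk (\<Phi>\<^sub>1 P\<^sub>k)\<close> for infinitely many \<open>k\<close>. As \<open>\<Phi>\<^sub>1 P\<^sub>k\<close> has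
  finite rank, a dimension count gives unit vectors \<open>x\<^sub>k\<close> in the range of \<open>\<Phi>\<^sub>2 P\<^sub>k\<close> with
  \<open>\<Phi>\<^sub>1 P\<^sub>k v\<^sub>1\<^sup>* v\<^sub>2 x\<^sub>k = 0\<close>. Strong continuity makes these vectors weakly null, so a
  gliding hump along a sparse set \<open>S\<close> of such indices keeps \<open>\<Phi>\<^sub>1 \<chi>\<^sub>S v\<^sub>1\<^sup>* v\<^sub>2 x\<^sub>k\<close> small,
  while \<open>\<Phi>\<^sub>2 \<chi>\<^sub>S\<close> fixes \<open>x\<^sub>k\<close>. The compact operator
  \<open>v\<^sub>1 \<Phi>\<^sub>1(\<chi>\<^sub>S) v\<^sub>1\<^sup>* - v\<^sub>2 \<Phi>\<^sub>2(\<chi>\<^sub>S) v\<^sub>2\<^sup>*\<close> sends the weakly null sequence \<open>v\<^sub>2 x\<^sub>k\<close> to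
  a norm null one; since \<open>v\<^sub>1\<close> and \<open>v\<^sub>2\<close> are isometries up to finite rank, this approximates
  \<open>v\<^sub>2 x\<^sub>k\<close>, of norm close to 1, by the small vectors \<open>v\<^sub>1 \<Phi>\<^sub>1(\<chi>\<^sub>S) v\<^sub>1\<^sup>* v\<^sub>2 x\<^sub>k\<close>.
  The same argument with the roles exchanged gives the theorem.
\<close>

section \<open>Square-summable sequences\<close>

lemma tendsto_0_if_eventually_norm_le:
  fixes f :: "'a \<Rightarrow> 'b::real_normed_vector"
  assumes "eventually (\<lambda>x. norm (f x) \<le> g x) F" "(g \<longlongrightarrow> 0) F"
  shows "(f \<longlongrightarrow> 0) F"
  using assms(1) by (intro tendsto_0_le[OF assms(2), where K=1]) (auto elim: eventually_mono)

lemma l2_summable: "x \<in> l2 \<Longrightarrow> summable (\<lambda>n. (cmod (x n))\<^sup>2)"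
  by (simp add: l2_def)

lemma l2_if_partial_sums_bounded:
  assumes "\<And>N. (\<Sum>n<N. (cmod (x n))\<^sup>2) \<le> B"
  shows "x \<in> l2" "(\<Sum>n. (cmod (x n))\<^sup>2) \<le> B"
proof -
  have s: "summable (\<lambda>n. (cmod (x n))\<^sup>2)"
  proof (rule bounded_imp_summable[where B=B])
    show "(\<Sum>k\<le>n. (cmod (x k))\<^sup>2) \<le> B" for n using assms[of "Suc n"] by (simp only: lessThan_Suc_atMost)
  qed simp
  then show "x \<in> l2" by (simp add: l2_def)
  show "(\<Sum>n. (cmod (x n))\<^sup>2) \<le> B" using s assms by (rule suminf_le_const)
qed

lemma l2_suminf_nonneg: "x \<in> l2 \<Longrightarrow> 0 \<le> (\<Sum>n. (cmod (x n))\<^sup>2)"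
  by (intro suminf_nonneg l2_summable) auto

lemma l2norm_nonneg: "x \<in> l2 \<Longrightarrow> l2norm x \<ge> 0"
  by (simp add: l2norm_def l2_suminf_nonneg)

lemma l2norm_sq: "x \<in> l2 \<Longrightarrow> (l2norm x)\<^sup>2 = (\<Sum>n. (cmod (x n))\<^sup>2)"
  by (simp add: l2norm_def l2_suminf_nonneg)

lemma l2_partial_sum_le: "x \<in> l2 \<Longrightarrow> (\<Sum>n<N. (cmod (x n))\<^sup>2) \<le> (\<Sum>n. (cmod (x n))\<^sup>2)"
  by (intro sum_le_suminf l2_summable) auto

lemma L2_set_le_l2norm: "x \<in> l2 \<Longrightarrow> L2_set (\<lambda>n. cmod (x n)) {..<N} \<le> l2norm x"
  unfolding L2_set_def l2norm_def by (intro real_sqrt_le_mono l2_partial_sum_le)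

lemma l2_add:
  assumes "x \<in> l2" "y \<in> l2"
  shows "(\<lambda>n. x n + y n) \<in> l2" "l2norm (\<lambda>n. x n + y n) \<le> l2norm x + l2norm y"
proof -
  have b: "(\<Sum>n<N. (cmod (x n + y n))\<^sup>2) \<le> (l2norm x + l2norm y)\<^sup>2" for N
  proof -
    have "L2_set (\<lambda>n. cmod (x n + y n)) {..<N} \<le> L2_set (\<lambda>n. cmod (x n) + cmod (y n)) {..<N}"
      by (rule L2_set_mono) (auto simp: norm_triangle_ineq)
    also have "\<dots> \<le> L2_set (\<lambda>n. cmod (x n)) {..<N} + L2_set (\<lambda>n. cmod (y n)) {..<N}"
      by (rule L2_set_triangle_ineq)
    also have "\<dots> \<le> l2norm x + l2norm y" by (intro add_mono L2_set_le_l2norm assms)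
    finally have "sqrt (\<Sum>n<N. (cmod (x n + y n))\<^sup>2) \<le> l2norm x + l2norm y"
      by (simp add: L2_set_def)
    moreover have nn: "0 \<le> (\<Sum>n<N. (cmod (x n + y n))\<^sup>2)" by (intro sum_nonneg) simp
    ultimately have "(sqrt (\<Sum>n<N. (cmod (x n + y n))\<^sup>2))\<^sup>2 \<le> (l2norm x + l2norm y)\<^sup>2"
      by (intro power_mono real_sqrt_ge_zero)
    then show ?thesis using nn by simp
  qed
  show "(\<lambda>n. x n + y n) \<in> l2" using l2_if_partial_sums_bounded(1)[OF b] .
  have "(\<Sum>n. (cmod (x n + y n))\<^sup>2) \<le> (l2norm x + l2norm y)\<^sup>2" using l2_if_partial_sums_bounded(2)[OF b] .
  then have "sqrt (\<Sum>n. (cmod (x n + y n))\<^sup>2) \<le> sqrt ((l2norm x + l2norm y)\<^sup>2)"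
    by (rule real_sqrt_le_mono)
  also have "\<dots> = l2norm x + l2norm y"
    using l2norm_nonneg[OF assms(1)] l2norm_nonneg[OF assms(2)] by simp
  finally show "l2norm (\<lambda>n. x n + y n) \<le> l2norm x + l2norm y"
    unfolding l2norm_def[of "\<lambda>n. x n + y n"] .
qed

lemma l2_scale:
  assumes "x \<in> l2"
  shows "(\<lambda>n. c * x n) \<in> l2" "l2norm (\<lambda>n. c * x n) = cmod c * l2norm x"
proof -
  have e: "(\<lambda>n. (cmod (c * x n))\<^sup>2) = (\<lambda>n. (cmod c)\<^sup>2 * (cmod (x n))\<^sup>2)"
    by (simp add: norm_mult power_mult_distrib)
  have s: "summable (\<lambda>n. (cmod (c * x n))\<^sup>2)" unfolding e
    using l2_summable[OF assms] by (rule summable_mult)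
  then show "(\<lambda>n. c * x n) \<in> l2" by (simp add: l2_def)
  have "(\<Sum>n. (cmod (c * x n))\<^sup>2) = (cmod c)\<^sup>2 * (\<Sum>n. (cmod (x n))\<^sup>2)"
    unfolding e using l2_summable[OF assms] by (rule suminf_mult)
  then show "l2norm (\<lambda>n. c * x n) = cmod c * l2norm x"
    by (simp add: l2norm_def real_sqrt_mult)
qed

lemma l2_zero: "(\<lambda>_. 0) \<in> l2" "l2norm (\<lambda>_. 0) = 0"
  unfolding l2_def l2norm_def by simp_all

lemma l2norm_neg: "l2norm (\<lambda>n. - z n) = l2norm z"
  unfolding l2norm_def by simp

lemma l2_uminus: "x \<in> l2 \<Longrightarrow> (\<lambda>n. - x n) \<in> l2"
  using l2_scale(1)[of x "-1"] by simp

lemma l2_diff: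
  assumes "x \<in> l2" "y \<in> l2"
  shows "(\<lambda>n. x n - y n) \<in> l2" "l2norm (\<lambda>n. x n - y n) \<le> l2norm x + l2norm y"
proof -
  have e: "(\<lambda>n. x n + - y n) = (\<lambda>n. x n - y n)" by simp
  show "(\<lambda>n. x n - y n) \<in> l2" using l2_add(1)[OF assms(1) l2_uminus[OF assms(2)]] unfolding e .
  show "l2norm (\<lambda>n. x n - y n) \<le> l2norm x + l2norm y"
    using l2_add(2)[OF assms(1) l2_uminus[OF assms(2)]] l2norm_neg unfolding e by simp
qed

lemma l2norm_diff_commute: "l2norm (\<lambda>n. x n - y n) = l2norm (\<lambda>n. y n - x n)"
  unfolding l2norm_def by (simp add: norm_minus_commute)


lemma l2norm_eq_0_iff: "x \<in> l2 \<Longrightarrow> l2norm x = 0 \<longleftrightarrow> x = (\<lambda>_. 0)"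
proof
  assume x: "x \<in> l2" and "l2norm x = 0"
  then have z: "(\<Sum>n. (cmod (x n))\<^sup>2) = 0" by (simp add: l2norm_def l2_suminf_nonneg)
  show "x = (\<lambda>_. 0)"
  proof
    fix n
    have "(cmod (x n))\<^sup>2 = 0"
      using suminf_eq_zero_iff[OF l2_summable[OF x]] z by auto
    then show "x n = 0" by simp
  qed
qed (simp add: l2_zero)

lemma l2_normalize:
  assumes w: "w \<in> l2" "w \<noteq> (\<lambda>_. 0)"
  shows "(\<lambda>n. complex_of_real (1 / l2norm w) * w n) \<in> l2"
    "l2norm (\<lambda>n. complex_of_real (1 / l2norm w) * w n) = 1"
proof -
  have r: "l2norm w > 0" using l2norm_nonneg[OF w(1)] l2norm_eq_0_iff[OF w(1)] w(2) by auto
  show "(\<lambda>n. complex_of_real (1 / l2norm w) * w n) \<in> l2" by (rule l2_scale(1)[OF w(1)])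
  have "l2norm (\<lambda>n. complex_of_real (1 / l2norm w) * w n)
      = cmod (complex_of_real (1 / l2norm w)) * l2norm w"
    by (rule l2_scale(2)[OF w(1)])
  also have "\<dots> = 1" using r by (simp add: norm_divide)
  finally show "l2norm (\<lambda>n. complex_of_real (1 / l2norm w) * w n) = 1" .
qed

lemma l2inner_abs_summable:
  assumes "x \<in> l2" "y \<in> l2"
  shows "summable (\<lambda>n. cmod (cnj (x n) * y n))"
    "(\<Sum>n. cmod (cnj (x n) * y n)) \<le> l2norm x * l2norm y"
proof -
  have b: "(\<Sum>n<N. cmod (cnj (x n) * y n)) \<le> l2norm x * l2norm y" for N
  proof -
    have "(\<Sum>n<N. cmod (cnj (x n) * y n)) = (\<Sum>n<N. \<bar>cmod (x n)\<bar> * \<bar>cmod (y n)\<bar>)"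
      by (simp add: norm_mult)
    also have "\<dots> \<le> L2_set (\<lambda>n. cmod (x n)) {..<N} * L2_set (\<lambda>n. cmod (y n)) {..<N}"
      by (rule L2_set_mult_ineq)
    also have "\<dots> \<le> l2norm x * l2norm y"
      by (intro mult_mono L2_set_le_l2norm assms l2norm_nonneg) (auto simp: L2_set_def intro!: sum_nonneg)
    finally show ?thesis .
  qed
  show s: "summable (\<lambda>n. cmod (cnj (x n) * y n))"
  proof (rule bounded_imp_summable[where B="l2norm x * l2norm y"])
    show "(\<Sum>k\<le>n. cmod (cnj (x k) * y k)) \<le> l2norm x * l2norm y" for n using b[of "Suc n"] by (simp only: lessThan_Suc_atMost)
  qed simp
  show "(\<Sum>n. cmod (cnj (x n) * y n)) \<le> l2norm x * l2norm y"
    using s b by (rule suminf_le_const)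
qed

lemma l2inner_summable: "x \<in> l2 \<Longrightarrow> y \<in> l2 \<Longrightarrow> summable (\<lambda>n. cnj (x n) * y n)"
  by (rule summable_norm_cancel[OF l2inner_abs_summable(1)])

lemma l2_Cauchy_Schwarz: "x \<in> l2 \<Longrightarrow> y \<in> l2 \<Longrightarrow> cmod (l2inner x y) \<le> l2norm x * l2norm y"
  unfolding l2inner_def
  by (rule order_trans[OF summable_norm[OF l2inner_abs_summable(1)] l2inner_abs_summable(2)])

lemma l2inner_self: "x \<in> l2 \<Longrightarrow> l2inner x x = complex_of_real ((l2norm x)\<^sup>2)"
proof -
  assume x: "x \<in> l2"
  have "(\<lambda>n. cnj (x n) * x n) = (\<lambda>n. complex_of_real ((cmod (x n))\<^sup>2))"
  proof (rule ext)
    fix n show "cnj (x n) * x n = complex_of_real ((cmod (x n))\<^sup>2)"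
      by (subst complex_norm_square) (simp add: mult.commute)
  qed
  then show ?thesis unfolding l2inner_def l2norm_sq[OF x]
    using suminf_of_real[OF l2_summable[OF x], where 'a=complex] by simp
qed

lemma l2inner_add_right: "x \<in> l2 \<Longrightarrow> y \<in> l2 \<Longrightarrow> z \<in> l2 \<Longrightarrow>
   l2inner x (\<lambda>n. y n + z n) = l2inner x y + l2inner x z"
  unfolding l2inner_def by (simp add: distrib_left suminf_add[OF l2inner_summable l2inner_summable])

lemma l2inner_scale_right: "x \<in> l2 \<Longrightarrow> y \<in> l2 \<Longrightarrow> l2inner x (\<lambda>n. c * y n) = c * l2inner x y"
  unfolding l2inner_def using suminf_mult[OF l2inner_summable, of x y c]
  by (simp add: algebra_simps)

lemma l2inner_commute: "x \<in> l2 \<Longrightarrow> y \<in> l2 \<Longrightarrow> l2inner y x = cnj (l2inner x y)"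
proof -
  assume a: "x \<in> l2" "y \<in> l2"
  have "(\<lambda>n. cnj (cnj (x n) * y n)) sums cnj (\<Sum>n. cnj (x n) * y n)"
    unfolding sums_cnj by (rule summable_sums[OF l2inner_summable[OF a]])
  moreover have "(\<lambda>n. cnj (cnj (x n) * y n)) = (\<lambda>n. cnj (y n) * x n)" by (simp add: mult.commute)
  ultimately have "(\<lambda>n. cnj (y n) * x n) sums cnj (\<Sum>n. cnj (x n) * y n)" by simp
  then show ?thesis unfolding l2inner_def by (rule sums_unique[symmetric])
qed

lemma l2inner_add_left: "x \<in> l2 \<Longrightarrow> y \<in> l2 \<Longrightarrow> z \<in> l2 \<Longrightarrow>
   l2inner (\<lambda>n. x n + y n) z = l2inner x z + l2inner y z"
proof -
  assume a: "x \<in> l2" "y \<in> l2" "z \<in> l2"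
  have "l2inner (\<lambda>n. x n + y n) z = cnj (l2inner z (\<lambda>n. x n + y n))"
    using l2inner_commute[OF a(3) l2_add(1)[OF a(1,2)]] .
  also have "\<dots> = cnj (l2inner z x + l2inner z y)" using l2inner_add_right[OF a(3,1,2)] by simp
  also have "\<dots> = l2inner x z + l2inner y z" using l2inner_commute[OF a(3) a(1)] l2inner_commute[OF a(3) a(2)] by simp
  finally show ?thesis .
qed

lemma l2inner_scale_left: "x \<in> l2 \<Longrightarrow> y \<in> l2 \<Longrightarrow> l2inner (\<lambda>n. c * x n) y = cnj c * l2inner x y"
proof -
  assume a: "x \<in> l2" "y \<in> l2"
  have "l2inner (\<lambda>n. c * x n) y = cnj (l2inner y (\<lambda>n. c * x n))"
    using l2inner_commute[OF a(2) l2_scale(1)[OF a(1)]] .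
  also have "\<dots> = cnj (c * l2inner y x)" using l2inner_scale_right[OF a(2,1)] by simp
  also have "\<dots> = cnj c * l2inner x y" using l2inner_commute[OF a(2) a(1)] by simp
  finally show ?thesis .
qed

lemma l2inner_zero_left: "l2inner (\<lambda>_. 0) y = 0"
  unfolding l2inner_def by simp

lemma cnj_mult_self_eq_norm_sq: "cnj z * z = complex_of_real ((cmod z)\<^sup>2)"
  by (subst complex_norm_square) (simp add: mult.commute)

lemma l2inner_diff_left: "x \<in> l2 \<Longrightarrow> y \<in> l2 \<Longrightarrow> z \<in> l2 \<Longrightarrow>
   l2inner (\<lambda>n. x n - y n) z = l2inner x z - l2inner y z"
proof -
  assume a: "x \<in> l2" "y \<in> l2" "z \<in> l2"
  have "l2inner (\<lambda>n. x n + - y n) z = l2inner x z + l2inner (\<lambda>n. - y n) z"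
    by (rule l2inner_add_left[OF a(1) l2_uminus[OF a(2)] a(3)])
  moreover have "l2inner (\<lambda>n. - y n) z = - l2inner y z" using l2inner_scale_left[OF a(2,3), of "-1"] by simp
  ultimately show ?thesis by simp
qed

lemma l2inner_diff_right: "x \<in> l2 \<Longrightarrow> y \<in> l2 \<Longrightarrow> z \<in> l2 \<Longrightarrow>
   l2inner z (\<lambda>n. x n - y n) = l2inner z x - l2inner z y"
proof -
  assume a: "x \<in> l2" "y \<in> l2" "z \<in> l2"
  have "l2inner z (\<lambda>n. x n + - y n) = l2inner z x + l2inner z (\<lambda>n. - y n)"
    by (rule l2inner_add_right[OF a(3) a(1) l2_uminus[OF a(2)]])
  moreover have "l2inner z (\<lambda>n. - y n) = - l2inner z y" using l2inner_scale_right[OF a(3,2), of "-1"] by simp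
  ultimately show ?thesis by simp
qed

lemma l2_sum: "finite I \<Longrightarrow> (\<forall>i\<in>I. v i \<in> l2) \<Longrightarrow> (\<lambda>m. \<Sum>i\<in>I. c i * v i m) \<in> l2"
proof (induction I rule: finite_induct)
  case empty then show ?case using l2_zero by simp
next
  case (insert j I)
  have e: "(\<lambda>m. \<Sum>i\<in>insert j I. c i * v i m) = (\<lambda>m. c j * v j m + (\<Sum>i\<in>I. c i * v i m))"
    using insert(1,2) by simp
  show ?case unfolding e using insert l2_add(1) l2_scale(1) by simp
qed

lemma l2inner_sum_left: "finite I \<Longrightarrow> (\<forall>i\<in>I. v i \<in> l2) \<Longrightarrow> y \<in> l2 \<Longrightarrow>
  l2inner (\<lambda>m. \<Sum>i\<in>I. c i * v i m) y = (\<Sum>i\<in>I. cnj (c i) * l2inner (v i) y)"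
proof (induction I rule: finite_induct)
  case empty then show ?case by (simp add: l2inner_zero_left)
next
  case (insert j I)
  have e: "(\<lambda>m. \<Sum>i\<in>insert j I. c i * v i m) = (\<lambda>m. c j * v j m + (\<Sum>i\<in>I. c i * v i m))"
    using insert(1,2) by simp
  have vj: "v j \<in> l2" and vI: "\<forall>i\<in>I. v i \<in> l2" using insert(4) by auto
  have "l2inner (\<lambda>m. c j * v j m + (\<Sum>i\<in>I. c i * v i m)) y
      = l2inner (\<lambda>m. c j * v j m) y + l2inner (\<lambda>m. \<Sum>i\<in>I. c i * v i m) y"
    by (rule l2inner_add_left[OF l2_scale(1)[OF vj] l2_sum[OF insert(1) vI] insert(5)])
  also have "\<dots> = cnj (c j) * l2inner (v j) y + (\<Sum>i\<in>I. cnj (c i) * l2inner (v i) y)"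
    using l2inner_scale_left[OF vj insert(5)] insert(3)[OF vI insert(5)] by simp
  finally show ?case unfolding e using insert(1,2) by simp
qed

lemma l2inner_sum_right: "finite I \<Longrightarrow> (\<forall>i\<in>I. v i \<in> l2) \<Longrightarrow> y \<in> l2 \<Longrightarrow>
  l2inner y (\<lambda>m. \<Sum>i\<in>I. c i * v i m) = (\<Sum>i\<in>I. c i * l2inner y (v i))"
proof -
  assume a: "finite I" "\<forall>i\<in>I. v i \<in> l2" "y \<in> l2"
  have "l2inner y (\<lambda>m. \<Sum>i\<in>I. c i * v i m) = cnj (l2inner (\<lambda>m. \<Sum>i\<in>I. c i * v i m) y)"
    using l2inner_commute[OF l2_sum[OF a(1,2)] a(3)] .
  also have "\<dots> = cnj (\<Sum>i\<in>I. cnj (c i) * l2inner (v i) y)" using l2inner_sum_left[OF a] by simp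
  also have "\<dots> = (\<Sum>i\<in>I. c i * l2inner y (v i))"
    using a(2,3) by (simp add: l2inner_commute[OF a(3)])
  finally show ?thesis .
qed

lemma l2norm_sum_le: "finite I \<Longrightarrow> (\<forall>i\<in>I. v i \<in> l2) \<Longrightarrow>
  l2norm (\<lambda>m. \<Sum>i\<in>I. c i * v i m) \<le> (\<Sum>i\<in>I. cmod (c i) * l2norm (v i))"
proof (induction I rule: finite_induct)
  case empty then show ?case using l2_zero by simp
next
  case (insert j I)
  have e: "(\<lambda>m. \<Sum>i\<in>insert j I. c i * v i m) = (\<lambda>m. c j * v j m + (\<Sum>i\<in>I. c i * v i m))"
    using insert(1,2) by simp
  have vj: "v j \<in> l2" and vI: "\<forall>i\<in>I. v i \<in> l2" using insert(4) by auto
  have "l2norm (\<lambda>m. c j * v j m + (\<Sum>i\<in>I. c i * v i m)) \<le> l2norm (\<lambda>m. c j * v j m) + l2norm (\<lambda>m. \<Sum>i\<in>I. c i * v i m)"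
    by (rule l2_add(2)[OF l2_scale(1)[OF vj] l2_sum[OF insert(1) vI]])
  also have "\<dots> \<le> cmod (c j) * l2norm (v j) + (\<Sum>i\<in>I. cmod (c i) * l2norm (v i))"
    using l2_scale(2)[OF vj] insert(3)[OF vI] by simp
  finally show ?case unfolding e using insert(1,2) by simp
qed

lemma Pk_l2: "Pk k \<in> l2"
proof -
  have "(\<lambda>n. (cmod (Pk k n))\<^sup>2) = (\<lambda>n. if n = k then 1 else 0)" by (auto simp: Pk_def)
  moreover have "summable (\<lambda>n. if n = k then (1::real) else 0)"
    using sums_single[of k "\<lambda>_. (1::real)"] by (simp add: sums_iff)
  ultimately show ?thesis by (simp add: l2_def)
qed

lemma l2inner_Pk_left: "l2inner (Pk k) y = y k"
proof -
  have "(\<lambda>n. cnj (Pk k n) * y n) = (\<lambda>n. if n = k then y n else 0)" by (auto simp: Pk_def)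
  then show ?thesis unfolding l2inner_def using sums_single[of k y] by (simp add: sums_iff)
qed

definition trunc :: "nat \<Rightarrow> vec \<Rightarrow> vec" where
  "trunc N x = (\<lambda>m. if m < N then x m else 0)"

lemma trunc_eq_sum_Pk: "trunc N x = (\<lambda>m. \<Sum>n\<in>{..<N}. x n * Pk n m)"
  by (rule ext) (simp add: trunc_def Pk_def if_distrib sum.delta sum.delta' cong: if_cong)

lemma l2_trunc: "trunc N x \<in> l2"
  unfolding trunc_eq_sum_Pk by (rule l2_sum) (auto simp: Pk_l2)

lemma l2norm_trunc_sq: "(l2norm (trunc N s))\<^sup>2 = (\<Sum>n<N. (cmod (s n))\<^sup>2)"
proof -
  have "(\<Sum>m. (cmod (trunc N s m))\<^sup>2) = (\<Sum>m\<in>{..<N}. (cmod (trunc N s m))\<^sup>2)"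
    by (rule suminf_finite) (auto simp: trunc_def)
  also have "\<dots> = (\<Sum>n<N. (cmod (s n))\<^sup>2)" by (intro sum.cong) (auto simp: trunc_def)
  finally show ?thesis using l2norm_sq[OF l2_trunc] by simp
qed

lemma l2norm_tail_tendsto_0:
  assumes x: "x \<in> l2"
  shows "(\<lambda>N. l2norm (\<lambda>m. x m - trunc N x m)) \<longlonglongrightarrow> 0"
proof -
  let ?g = "\<lambda>m. (cmod (x m))\<^sup>2"
  have g: "?g sums (\<Sum>m. ?g m)" using l2_summable[OF x] by (rule summable_sums)
  have eq: "(\<Sum>m. (cmod (x m - trunc N x m))\<^sup>2) = (\<Sum>m. ?g m) - (\<Sum>m<N. ?g m)" for N
  proof -
    have f: "(\<lambda>m. if m \<in> {..<N} then ?g m else 0) sums (\<Sum>m\<in>{..<N}. ?g m)"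
      by (rule sums_If_finite_set) simp
    have "(\<lambda>m. ?g m - (if m \<in> {..<N} then ?g m else 0)) sums ((\<Sum>m. ?g m) - (\<Sum>m<N. ?g m))"
      using sums_diff[OF g f] by simp
    moreover have "(\<lambda>m. ?g m - (if m \<in> {..<N} then ?g m else 0)) = (\<lambda>m. (cmod (x m - trunc N x m))\<^sup>2)"
      by (rule ext) (simp add: trunc_def)
    ultimately show ?thesis by (simp add: sums_iff)
  qed
  have "(\<lambda>N. (\<Sum>m. ?g m) - (\<Sum>m<N. ?g m)) \<longlonglongrightarrow> (\<Sum>m. ?g m) - (\<Sum>m. ?g m)"
    by (intro tendsto_diff tendsto_const summable_LIMSEQ l2_summable x)
  then have "(\<lambda>N. sqrt ((\<Sum>m. ?g m) - (\<Sum>m<N. ?g m))) \<longlonglongrightarrow> sqrt 0"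
    by (intro tendsto_real_sqrt) simp
  then show ?thesis unfolding l2norm_def eq by simp
qed

section \<open>Bounded operators and adjoints\<close>

lemma bop_l2: "bop T \<Longrightarrow> x \<in> l2 \<Longrightarrow> T x \<in> l2"
  by (simp add: bop_def)

lemma bop_out: "bop T \<Longrightarrow> x \<notin> l2 \<Longrightarrow> T x = (\<lambda>_. 0)"
  by (simp add: bop_def)

lemma bop_add: "bop T \<Longrightarrow> x \<in> l2 \<Longrightarrow> y \<in> l2 \<Longrightarrow> T (\<lambda>n. x n + y n) = (\<lambda>n. T x n + T y n)"
  by (simp add: bop_def)

lemma bop_scale: "bop T \<Longrightarrow> x \<in> l2 \<Longrightarrow> T (\<lambda>n. c * x n) = (\<lambda>n. c * T x n)"
  by (simp add: bop_def)

lemma bop_bound: "bop T \<Longrightarrow> \<exists>C\<ge>0. \<forall>x\<in>l2. l2norm (T x) \<le> C * l2norm x"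
proof -
  assume "bop T"
  then obtain C where C: "\<forall>x\<in>l2. l2norm (T x) \<le> C * l2norm x" by (auto simp: bop_def)
  have "\<forall>x\<in>l2. l2norm (T x) \<le> max C 0 * l2norm x"
  proof
    fix x assume x: "x \<in> l2"
    have "C * l2norm x \<le> max C 0 * l2norm x" by (intro mult_right_mono l2norm_nonneg x) simp
    then show "l2norm (T x) \<le> max C 0 * l2norm x" using C x by auto
  qed
  then show ?thesis by (intro exI[of _ "max C 0"]) simp
qed

lemma bop_zero: "bop T \<Longrightarrow> T (\<lambda>_. 0) = (\<lambda>_. 0)"
  using bop_scale[of T "\<lambda>_. 0" 0] l2_zero by simp

lemma bop_uminus: "bop T \<Longrightarrow> x \<in> l2 \<Longrightarrow> T (\<lambda>n. - x n) = (\<lambda>n. - T x n)"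
  using bop_scale[of T x "-1"] by simp

lemma bop_diff: "bop T \<Longrightarrow> x \<in> l2 \<Longrightarrow> y \<in> l2 \<Longrightarrow> T (\<lambda>n. x n - y n) = (\<lambda>n. T x n - T y n)"
proof -
  assume a: "bop T" "x \<in> l2" "y \<in> l2"
  have e: "(\<lambda>n. x n - y n) = (\<lambda>n. x n + (- y n))" by simp
  show ?thesis unfolding e
    using bop_add[OF a(1,2) l2_uminus[OF a(3)]] bop_uminus[OF a(1,3)] by simp
qed

lemma bop_sum: assumes T: "bop T" shows "finite I \<Longrightarrow> (\<forall>i\<in>I. v i \<in> l2) \<Longrightarrow>
   T (\<lambda>m. \<Sum>i\<in>I. c i * v i m) = (\<lambda>m. \<Sum>i\<in>I. c i * T (v i) m)"
proof (induction I rule: finite_induct)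
  case empty then show ?case using bop_zero[OF T] by simp
next
  case (insert j I)
  have e: "(\<lambda>m. \<Sum>i\<in>insert j I. c i * v i m) = (\<lambda>m. c j * v j m + (\<Sum>i\<in>I. c i * v i m))"
    using insert(1,2) by simp
  have vj: "v j \<in> l2" and vI: "\<forall>i\<in>I. v i \<in> l2" using insert(4) by auto
  have "T (\<lambda>m. c j * v j m + (\<Sum>i\<in>I. c i * v i m)) = (\<lambda>m. T (\<lambda>m. c j * v j m) m + T (\<lambda>m. \<Sum>i\<in>I. c i * v i m) m)"
    by (rule bop_add[OF T l2_scale(1)[OF vj] l2_sum[OF insert(1) vI]])
  also have "\<dots> = (\<lambda>m. c j * T (v j) m + (\<Sum>i\<in>I. c i * T (v i) m))"
    using bop_scale[OF T vj] insert(3)[OF vI] by simp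
  finally show ?case unfolding e using insert(1,2) by simp
qed

lemma bop_comp: assumes A: "bop A" and B: "bop B" shows "bop (A \<circ> B)"
proof -
  obtain CA where CA: "CA \<ge> 0" "\<forall>x\<in>l2. l2norm (A x) \<le> CA * l2norm x" using bop_bound[OF A] by blast
  obtain CB where CB: "CB \<ge> 0" "\<forall>x\<in>l2. l2norm (B x) \<le> CB * l2norm x" using bop_bound[OF B] by blast
  show ?thesis unfolding bop_def
  proof (intro conjI ballI allI impI)
    fix x assume x: "x \<in> l2"
    show "(A \<circ> B) x \<in> l2" using bop_l2[OF A bop_l2[OF B x]] by simp
    fix c show "(A \<circ> B) (\<lambda>n. c * x n) = (\<lambda>n. c * (A \<circ> B) x n)"
      using bop_scale[OF B x] bop_scale[OF A bop_l2[OF B x]] by simp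
  next
    fix x assume "x \<notin> l2" then show "(A \<circ> B) x = (\<lambda>_. 0)" using bop_out[OF B] bop_zero[OF A] by simp
  next
    fix x y assume x: "x \<in> l2" and y: "y \<in> l2"
    show "(A \<circ> B) (\<lambda>n. x n + y n) = (\<lambda>n. (A \<circ> B) x n + (A \<circ> B) y n)"
      using bop_add[OF B x y] bop_add[OF A bop_l2[OF B x] bop_l2[OF B y]] by simp
  next
    have "\<forall>x\<in>l2. l2norm ((A \<circ> B) x) \<le> (CA * CB) * l2norm x"
    proof
      fix x assume x: "x \<in> l2"
      have "l2norm (A (B x)) \<le> CA * l2norm (B x)" using CA bop_l2[OF B x] by auto
      also have "\<dots> \<le> CA * (CB * l2norm x)" using CB x CA(1) by (intro mult_left_mono) auto
      finally show "l2norm ((A \<circ> B) x) \<le> (CA * CB) * l2norm x" by (simp add: mult.assoc)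
    qed
    then show "\<exists>C. \<forall>x\<in>l2. l2norm ((A \<circ> B) x) \<le> C * l2norm x" by blast
  qed
qed

lemma bop_ident: "bop ident"
  unfolding bop_def ident_def
proof (intro conjI ballI allI impI)
  show "\<exists>C. \<forall>x\<in>l2. l2norm (if x \<in> l2 then x else (\<lambda>_. 0)) \<le> C * l2norm x"
    by (rule exI[of _ 1]) simp
qed (auto simp: l2_add(1) l2_scale(1))

lemma ident_l2: "x \<in> l2 \<Longrightarrow> ident x = x"
  by (simp add: ident_def)

lemma bop_opminus: assumes A: "bop A" and B: "bop B" shows "bop (opminus A B)"
proof -
  obtain CA where CA: "CA \<ge> 0" "\<forall>x\<in>l2. l2norm (A x) \<le> CA * l2norm x" using bop_bound[OF A] by blast
  obtain CB where CB: "CB \<ge> 0" "\<forall>x\<in>l2. l2norm (B x) \<le> CB * l2norm x" using bop_bound[OF B] by blast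
  show ?thesis unfolding bop_def opminus_def
  proof (intro conjI ballI allI impI)
    fix x assume x: "x \<in> l2"
    show "(\<lambda>n. A x n - B x n) \<in> l2" by (rule l2_diff(1)[OF bop_l2[OF A x] bop_l2[OF B x]])
    fix c show "(\<lambda>n. A (\<lambda>n. c * x n) n - B (\<lambda>n. c * x n) n) = (\<lambda>n. c * (\<lambda>n. A x n - B x n) n)"
      using bop_scale[OF A x] bop_scale[OF B x] by (simp add: algebra_simps)
  next
    fix x assume "x \<notin> l2" then show "(\<lambda>n. A x n - B x n) = (\<lambda>_. 0)" using bop_out[OF A] bop_out[OF B] by simp
  next
    fix x y assume x: "x \<in> l2" and y: "y \<in> l2"
    show "(\<lambda>n. A (\<lambda>n. x n + y n) n - B (\<lambda>n. x n + y n) n) = (\<lambda>n. (\<lambda>n. A x n - B x n) n + (\<lambda>n. A y n - B y n) n)"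
      using bop_add[OF A x y] bop_add[OF B x y] by (simp add: algebra_simps)
  next
    have "\<forall>x\<in>l2. l2norm (\<lambda>n. A x n - B x n) \<le> (CA + CB) * l2norm x"
    proof
      fix x assume x: "x \<in> l2"
      have "l2norm (\<lambda>n. A x n - B x n) \<le> l2norm (A x) + l2norm (B x)"
        by (rule l2_diff(2)[OF bop_l2[OF A x] bop_l2[OF B x]])
      also have "\<dots> \<le> CA * l2norm x + CB * l2norm x" using CA CB x by (intro add_mono) auto
      finally show "l2norm (\<lambda>n. A x n - B x n) \<le> (CA + CB) * l2norm x" by (simp add: algebra_simps)
    qed
    then show "\<exists>C. \<forall>x\<in>l2. l2norm (\<lambda>n. A x n - B x n) \<le> C * l2norm x" by blast
  qed
qed

lemma bop_uminus_op:
  assumes F: "bop F" shows "bop (\<lambda>x n. - F x n)"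
  unfolding bop_def
proof (intro conjI ballI allI impI)
  fix x assume x: "x \<in> l2"
  show "(\<lambda>n. - F x n) \<in> l2" by (rule l2_uminus[OF bop_l2[OF F x]])
  fix c show "(\<lambda>n. - F (\<lambda>n. c * x n) n) = (\<lambda>n. c * - F x n)" using bop_scale[OF F x] by simp
next
  fix x assume "x \<notin> l2" then show "(\<lambda>n. - F x n) = (\<lambda>_. 0)" using bop_out[OF F] by simp
next
  fix x y assume "x \<in> l2" "y \<in> l2"
  then show "(\<lambda>n. - F (\<lambda>n. x n + y n) n) = (\<lambda>n. - F x n + - F y n)" using bop_add[OF F] by simp
next
  obtain C where "\<forall>x\<in>l2. l2norm (F x) \<le> C * l2norm x" using F by (auto simp: bop_def)
  then show "\<exists>C. \<forall>x\<in>l2. l2norm (\<lambda>n. - F x n) \<le> C * l2norm x"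
    by (intro exI[of _ C]) (simp add: l2norm_neg)
qed

lemma l2inner_bop_trunc:
  assumes T: "bop T" and y: "y \<in> l2"
  shows "l2inner (T (trunc N s)) y = (\<Sum>n<N. cnj (s n) * l2inner (T (Pk n)) y)"
proof -
  have "T (trunc N s) = (\<lambda>m. \<Sum>n\<in>{..<N}. s n * T (Pk n) m)"
    unfolding trunc_eq_sum_Pk by (rule bop_sum[OF T]) (auto simp: Pk_l2)
  then show ?thesis by (simp add: l2inner_sum_left bop_l2[OF T Pk_l2] y)
qed

lemma l2inner_bop_trunc_tendsto:
  assumes T: "bop T" and x: "x \<in> l2" and y: "y \<in> l2"
  shows "(\<lambda>N. l2inner (T (trunc N x)) y) \<longlonglongrightarrow> l2inner (T x) y"
proof -
  obtain C where C: "C \<ge> 0" "\<forall>x\<in>l2. l2norm (T x) \<le> C * l2norm x" using bop_bound[OF T] by blast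
  have "norm (l2inner (T (trunc N x)) y - l2inner (T x) y) \<le> C * l2norm (\<lambda>m. x m - trunc N x m) * l2norm y"
    for N
  proof -
    have tl: "trunc N x \<in> l2" by (rule l2_trunc)
    have d: "(\<lambda>m. x m - trunc N x m) \<in> l2" by (rule l2_diff(1)[OF x tl])
    have "norm (l2inner (T (trunc N x)) y - l2inner (T x) y) = cmod (l2inner (T (\<lambda>m. x m - trunc N x m)) y)"
      using l2inner_diff_left[OF bop_l2[OF T x] bop_l2[OF T tl] y] bop_diff[OF T x tl]
      by (simp add: norm_minus_commute)
    also have "\<dots> \<le> l2norm (T (\<lambda>m. x m - trunc N x m)) * l2norm y"
      by (rule l2_Cauchy_Schwarz[OF bop_l2[OF T d] y])
    also have "\<dots> \<le> C * l2norm (\<lambda>m. x m - trunc N x m) * l2norm y"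
      by (intro mult_right_mono l2norm_nonneg y) (use C(2) d in auto)
    finally show ?thesis .
  qed
  then have "eventually (\<lambda>N. norm (l2inner (T (trunc N x)) y - l2inner (T x) y)
      \<le> C * l2norm (\<lambda>m. x m - trunc N x m) * l2norm y) sequentially"
    by simp
  moreover have "(\<lambda>N. C * l2norm (\<lambda>m. x m - trunc N x m) * l2norm y) \<longlonglongrightarrow> 0"
    using tendsto_mult[OF tendsto_mult[OF tendsto_const l2norm_tail_tendsto_0[OF x]] tendsto_const,
        of C "l2norm y"]
    by simp
  ultimately have "(\<lambda>N. l2inner (T (trunc N x)) y - l2inner (T x) y) \<longlonglongrightarrow> 0"
    by (rule tendsto_0_if_eventually_norm_le)
  then show ?thesis by (simp add: LIM_zero_iff)
qed

text \<open>The adjoint is given explicitly by its coefficients; this shows that the definite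
  description in \<^const>\<open>adj\<close> is well defined.\<close>

definition adj_coeffs :: "op \<Rightarrow> op" where
  "adj_coeffs T y = (if y \<in> l2 then (\<lambda>n. l2inner (T (Pk n)) y) else (\<lambda>_. 0))"

lemma adj_coeffs_partial_sums_le:
  assumes T: "bop T" and C: "C \<ge> 0" "\<forall>x\<in>l2. l2norm (T x) \<le> C * l2norm x" and y: "y \<in> l2"
  shows "(\<Sum>n<N. (cmod (adj_coeffs T y n))\<^sup>2) \<le> (C * l2norm y)\<^sup>2"
proof -
  define s where "s = adj_coeffs T y"
  define A where "A = (\<Sum>n<N. (cmod (s n))\<^sup>2)"
  have A0: "A \<ge> 0" unfolding A_def by (intro sum_nonneg) simp
  have t: "trunc N s \<in> l2" by (rule l2_trunc)
  have "l2inner (T (trunc N s)) y = complex_of_real A"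
    unfolding l2inner_bop_trunc[OF T y] A_def of_real_sum
    by (intro sum.cong refl) (simp add: s_def adj_coeffs_def y cnj_mult_self_eq_norm_sq)
  then have "A = cmod (l2inner (T (trunc N s)) y)" using A0 by simp
  also have "\<dots> \<le> l2norm (T (trunc N s)) * l2norm y"
    by (rule l2_Cauchy_Schwarz[OF bop_l2[OF T t] y])
  also have "\<dots> \<le> C * l2norm (trunc N s) * l2norm y"
    by (intro mult_right_mono l2norm_nonneg y) (use C(2) t in auto)
  also have "l2norm (trunc N s) = sqrt A"
    using l2norm_trunc_sq[of N s] l2norm_nonneg[OF t] unfolding A_def by (metis real_sqrt_unique)
  finally have "sqrt A * sqrt A \<le> sqrt A * (C * l2norm y)" using A0 by (simp add: algebra_simps)
  then have "sqrt A \<le> C * l2norm y \<or> sqrt A = 0"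
    using A0 by (metis mult_le_cancel_left real_sqrt_ge_zero order_le_less)
  then have "sqrt A \<le> C * l2norm y" using C(1) l2norm_nonneg[OF y] by auto
  then have "(sqrt A)\<^sup>2 \<le> (C * l2norm y)\<^sup>2" by (intro power_mono) (auto simp: A0)
  then show ?thesis using A0 unfolding A_def s_def by simp
qed

lemma adj_coeffs_bounded:
  assumes T: "bop T" and C: "C \<ge> 0" "\<forall>x\<in>l2. l2norm (T x) \<le> C * l2norm x" and y: "y \<in> l2"
  shows "adj_coeffs T y \<in> l2" "l2norm (adj_coeffs T y) \<le> C * l2norm y"
proof -
  note b = adj_coeffs_partial_sums_le[OF T C y]
  show "adj_coeffs T y \<in> l2" using l2_if_partial_sums_bounded(1)[OF b] .
  have "(\<Sum>n. (cmod (adj_coeffs T y n))\<^sup>2) \<le> (C * l2norm y)\<^sup>2"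
    using l2_if_partial_sums_bounded(2)[OF b] .
  then have "sqrt (\<Sum>n. (cmod (adj_coeffs T y n))\<^sup>2) \<le> sqrt ((C * l2norm y)\<^sup>2)"
    by (rule real_sqrt_le_mono)
  also have "\<dots> = C * l2norm y" using C(1) l2norm_nonneg[OF y] by simp
  finally show "l2norm (adj_coeffs T y) \<le> C * l2norm y" unfolding l2norm_def .
qed

lemma adj_coeffs_inner:
  assumes T: "bop T" and x: "x \<in> l2" and y: "y \<in> l2"
  shows "l2inner (T x) y = l2inner x (adj_coeffs T y)"
proof -
  have "(\<Sum>n<N. cnj (x n) * adj_coeffs T y n) = l2inner (T (trunc N x)) y" for N
    by (simp add: l2inner_bop_trunc[OF T y] adj_coeffs_def y)
  then have "(\<lambda>n. cnj (x n) * adj_coeffs T y n) sums l2inner (T x) y"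
    unfolding sums_def using l2inner_bop_trunc_tendsto[OF T x y] by simp
  then show ?thesis unfolding l2inner_def[of x] by (simp add: sums_unique)
qed

lemma bop_adj_coeffs: assumes T: "bop T" shows "bop (adj_coeffs T)"
proof -
  obtain C where C: "C \<ge> 0" "\<forall>x\<in>l2. l2norm (T x) \<le> C * l2norm x" using bop_bound[OF T] by blast
  have TP: "T (Pk n) \<in> l2" for n using bop_l2[OF T Pk_l2] .
  show ?thesis unfolding bop_def
  proof (intro conjI ballI allI impI)
    show "adj_coeffs T x \<in> l2" if "x \<in> l2" for x using adj_coeffs_bounded[OF T C that] by simp
    show "adj_coeffs T x = (\<lambda>_. 0)" if "x \<notin> l2" for x using that by (simp add: adj_coeffs_def)
    show "adj_coeffs T (\<lambda>n. x n + y n) = (\<lambda>n. adj_coeffs T x n + adj_coeffs T y n)" if "x \<in> l2" "y \<in> l2" for x y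
      using that l2_add(1)[OF that] l2inner_add_right[OF TP that] by (simp add: adj_coeffs_def)
    show "adj_coeffs T (\<lambda>n. c * x n) = (\<lambda>n. c * adj_coeffs T x n)" if "x \<in> l2" for x c
      using that l2_scale(1)[OF that] l2inner_scale_right[OF TP that] by (simp add: adj_coeffs_def)
    show "\<exists>C. \<forall>x\<in>l2. l2norm (adj_coeffs T x) \<le> C * l2norm x"
      using adj_coeffs_bounded(2)[OF T C] by blast
  qed
qed

lemma adj_eq_adj_coeffs: assumes T: "bop T" shows "adj T = adj_coeffs T"
  unfolding adj_def
proof (rule the_equality)
  show "bop (adj_coeffs T) \<and> (\<forall>x\<in>l2. \<forall>y\<in>l2. l2inner (T x) y = l2inner x (adj_coeffs T y))"
    using bop_adj_coeffs[OF T] adj_coeffs_inner[OF T] by blast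
  fix S assume S: "bop S \<and> (\<forall>x\<in>l2. \<forall>y\<in>l2. l2inner (T x) y = l2inner x (S y))"
  show "S = adj_coeffs T"
  proof (rule ext)
    fix y show "S y = adj_coeffs T y"
    proof (cases "y \<in> l2")
      case True
      show ?thesis
      proof (rule ext)
        fix n
        have "S y n = l2inner (Pk n) (S y)" by (simp add: l2inner_Pk_left)
        also have "\<dots> = l2inner (T (Pk n)) y" using S Pk_l2 True by simp
        finally show "S y n = adj_coeffs T y n" using True by (simp add: adj_coeffs_def)
      qed
    next
      case False
      then show ?thesis using S bop_out[of S y] by (simp add: adj_coeffs_def)
    qed
  qed
qed

lemma bop_adj: "bop T \<Longrightarrow> bop (adj T)"
  using adj_eq_adj_coeffs bop_adj_coeffs by simp

lemma adj_inner_right: "bop T \<Longrightarrow> x \<in> l2 \<Longrightarrow> y \<in> l2 \<Longrightarrow> l2inner (T x) y = l2inner x (adj T y)"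
  using adj_eq_adj_coeffs adj_coeffs_inner by simp

lemma adj_inner_left: "bop T \<Longrightarrow> x \<in> l2 \<Longrightarrow> y \<in> l2 \<Longrightarrow> l2inner (adj T x) y = l2inner x (T y)"
proof -
  assume a: "bop T" "x \<in> l2" "y \<in> l2"
  have "l2inner (adj T x) y = cnj (l2inner y (adj T x))"
    using l2inner_commute[OF a(3) bop_l2[OF bop_adj[OF a(1)] a(2)]] .
  also have "\<dots> = cnj (l2inner (T y) x)" using adj_inner_right[OF a(1,3,2)] by simp
  also have "\<dots> = l2inner x (T y)" using l2inner_commute[OF bop_l2[OF a(1,3)] a(2)] by simp
  finally show ?thesis .
qed

lemma bop_image_bounded:
  assumes B: "bop B" and y: "\<And>i. y i \<in> l2" "\<And>i. l2norm (y i) \<le> M"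
  obtains C where "\<And>i. l2norm (B (y i)) \<le> C"
proof -
  obtain C where C: "C \<ge> 0" "\<forall>x\<in>l2. l2norm (B x) \<le> C * l2norm x" using bop_bound[OF B] by blast
  have "l2norm (B (y i)) \<le> C * M" for i
    using C(2) y(1)[of i] mult_left_mono[OF y(2)[of i] C(1)] by fastforce
  then show ?thesis by (rule that)
qed

lemma bop_norm_tendsto_0:
  assumes B: "bop B" and y: "\<And>i. y i \<in> l2" and lim: "(\<lambda>i. l2norm (y i)) \<longlonglongrightarrow> 0"
  shows "(\<lambda>i. l2norm (B (y i))) \<longlonglongrightarrow> 0"
proof -
  obtain C where C: "C \<ge> 0" "\<forall>x\<in>l2. l2norm (B x) \<le> C * l2norm x" using bop_bound[OF B] by blast
  have "norm (l2norm (B (y i))) \<le> C * l2norm (y i)" for i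
    using C(2) y[of i] l2norm_nonneg[OF bop_l2[OF B y[of i]]] by simp
  then have "eventually (\<lambda>i. norm (l2norm (B (y i))) \<le> C * l2norm (y i)) sequentially" by simp
  moreover have "(\<lambda>i. C * l2norm (y i)) \<longlonglongrightarrow> 0" using tendsto_mult_right_zero[OF lim] by simp
  ultimately show ?thesis by (rule tendsto_0_if_eventually_norm_le)
qed

section \<open>Finite-dimensional subspaces and rank\<close>

lemma cspan_add: "x \<in> cspan E \<Longrightarrow> y \<in> cspan E \<Longrightarrow> (\<lambda>n. x n + y n) \<in> cspan E"
proof -
  assume "x \<in> cspan E" "y \<in> cspan E"
  then obtain c d where "x = (\<lambda>n. \<Sum>v\<in>E. c v * v n)" "y = (\<lambda>n. \<Sum>v\<in>E. d v * v n)"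
    by (auto simp: cspan_def)
  then have "(\<lambda>n. x n + y n) = (\<lambda>n. \<Sum>v\<in>E. (c v + d v) * v n)"
    by (simp add: sum.distrib distrib_right)
  then show ?thesis by (auto simp: cspan_def)
qed

lemma cspan_scale: "x \<in> cspan E \<Longrightarrow> (\<lambda>n. a * x n) \<in> cspan E"
proof -
  assume "x \<in> cspan E"
  then obtain c where "x = (\<lambda>n. \<Sum>v\<in>E. c v * v n)" by (auto simp: cspan_def)
  then have "(\<lambda>n. a * x n) = (\<lambda>n. \<Sum>v\<in>E. (a * c v) * v n)"
    by (simp add: sum_distrib_left mult.assoc)
  then show ?thesis by (auto simp: cspan_def)
qed

lemma cspan_zero: "(\<lambda>_. 0) \<in> cspan E"
  unfolding cspan_def by (rule CollectI, rule exI[of _ "\<lambda>_. 0"]) simp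

lemma cspan_sum: "finite I \<Longrightarrow> (\<forall>i\<in>I. v i \<in> cspan E) \<Longrightarrow> (\<lambda>m. \<Sum>i\<in>I. c i * v i m) \<in> cspan E"
proof (induction I rule: finite_induct)
  case empty then show ?case using cspan_zero by simp
next
  case (insert j I)
  have e: "(\<lambda>m. \<Sum>i\<in>insert j I. c i * v i m) = (\<lambda>m. c j * v j m + (\<Sum>i\<in>I. c i * v i m))"
    using insert(1,2) by simp
  show ?case unfolding e using insert by (intro cspan_add cspan_scale) auto
qed

lemma cspan_subset_cspan: "finite G \<Longrightarrow> G \<subseteq> cspan E \<Longrightarrow> cspan G \<subseteq> cspan E"
proof
  fix x assume G: "finite G" "G \<subseteq> cspan E" and x: "x \<in> cspan G"
  then obtain c where "x = (\<lambda>n. \<Sum>v\<in>G. c v * v n)" by (auto simp: cspan_def)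
  then show "x \<in> cspan E" using cspan_sum[OF G(1), of "\<lambda>v. v" E c] G(2) by auto
qed

lemma cspan_base: "finite E \<Longrightarrow> e \<in> E \<Longrightarrow> e \<in> cspan E"
proof -
  assume E: "finite E" "e \<in> E"
  have "(\<lambda>n. \<Sum>v\<in>E. (if v = e then 1 else 0) * v n) = e"
  proof (rule ext)
    fix n
    have "(\<Sum>v\<in>E. (if v = e then 1 else 0) * v n) = (\<Sum>v\<in>E. if v = e then e n else 0)"
      by (intro sum.cong) auto
    also have "\<dots> = e n" using E by (simp add: sum.delta)
    finally show "(\<Sum>v\<in>E. (if v = e then 1 else 0) * v n) = e n" .
  qed
  then show ?thesis unfolding cspan_def by (intro CollectI exI[of _ "\<lambda>v. if v = e then 1 else 0"]) simp
qed

definition orthonormal :: "vec set \<Rightarrow> bool" where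
  "orthonormal E \<longleftrightarrow> (\<forall>e\<in>E. l2inner e e = 1) \<and> (\<forall>e\<in>E. \<forall>e'\<in>E. e \<noteq> e' \<longrightarrow> l2inner e e' = 0)"

lemma orthonormal_coeff:
  assumes E: "finite E" "E \<subseteq> l2" "orthonormal E" and e: "e \<in> E"
  shows "l2inner e (\<lambda>n. \<Sum>v\<in>E. c v * v n) = c e"
proof -
  have "l2inner e (\<lambda>n. \<Sum>v\<in>E. c v * v n) = (\<Sum>v\<in>E. c v * l2inner e v)"
    by (rule l2inner_sum_right) (use E e in auto)
  also have "\<dots> = (\<Sum>v\<in>E. if v = e then c v else 0)"
    by (intro sum.cong refl) (use E(3) e in \<open>auto simp: orthonormal_def\<close>)
  also have "\<dots> = c e" using E(1) e by (simp add: sum.delta')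
  finally show ?thesis .
qed

lemma orthonormal_expand:
  assumes E: "finite E" "E \<subseteq> l2" "orthonormal E" and w: "w \<in> cspan E"
  shows "w = (\<lambda>n. \<Sum>v\<in>E. l2inner v w * v n)"
proof -
  obtain c where c: "w = (\<lambda>n. \<Sum>v\<in>E. c v * v n)" using w by (auto simp: cspan_def)
  have "\<forall>v\<in>E. l2inner v w = c v" unfolding c using orthonormal_coeff[OF E] by blast
  then show ?thesis unfolding c by (intro ext sum.cong) auto
qed

lemma orthonormal_insert:
  assumes E: "E \<subseteq> l2" "orthonormal E"
    and u: "u \<in> l2" "l2norm u = 1" "\<And>e. e \<in> E \<Longrightarrow> l2inner e u = 0"
  shows "orthonormal (insert u E)"
proof -
  have "l2inner u u = 1" using l2inner_self[OF u(1)] u(2) by simp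
  moreover have "l2inner u e = 0" if "e \<in> E" for e
    using u(3)[OF that] l2inner_commute[of e u] E(1) that u(1) by auto
  ultimately show ?thesis using E(2) u(3) unfolding orthonormal_def by auto
qed

lemma orthonormal_extend:
  assumes E: "finite E" "E \<subseteq> l2" "orthonormal E" and g: "g \<in> l2"
  shows "\<exists>E'. finite E' \<and> E' \<subseteq> l2 \<and> orthonormal E' \<and> cspan E \<subseteq> cspan E' \<and> g \<in> cspan E'"
proof -
  define p where "p = (\<lambda>n. \<Sum>v\<in>E. l2inner v g * v n)"
  define w where "w = (\<lambda>n. g n - p n)"
  have p: "p \<in> l2" unfolding p_def using l2_sum[OF E(1), of "\<lambda>v. v" "\<lambda>v. l2inner v g"] E(2) by auto
  have pE: "p \<in> cspan E" unfolding p_def cspan_def by auto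
  have w: "w \<in> l2" unfolding w_def by (rule l2_diff(1)[OF g p])
  have w_orth: "l2inner e w = 0" if e: "e \<in> E" for e
  proof -
    have "l2inner e w = l2inner e g - l2inner e p"
      unfolding w_def by (rule l2inner_diff_right[OF g p]) (use e E in auto)
    also have "l2inner e p = l2inner e g" unfolding p_def by (rule orthonormal_coeff[OF E(1-3) e])
    finally show ?thesis by simp
  qed
  show ?thesis
  proof (cases "w = (\<lambda>_. 0)")
    case True
    then have "g = p" unfolding w_def by (simp add: fun_eq_iff)
    then show ?thesis using E pE by (intro exI[of _ E]) auto
  next
    case False
    define r where "r = l2norm w"
    have r: "r > 0" using l2norm_nonneg[OF w] l2norm_eq_0_iff[OF w] False unfolding r_def by auto
    define u where "u = (\<lambda>n. complex_of_real (1 / r) * w n)"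
    have u: "u \<in> l2" "l2norm u = 1" unfolding u_def r_def by (rule l2_normalize[OF w False])+
    have "l2inner e u = 0" if "e \<in> E" for e
    proof -
      have "l2inner e u = complex_of_real (1 / r) * l2inner e w"
        unfolding u_def by (rule l2inner_scale_right[OF _ w]) (use E(2) that in auto)
      then show ?thesis using w_orth[OF that] by simp
    qed
    then have E': "orthonormal (insert u E)" by (rule orthonormal_insert[OF E(2,3) u])
    have sub: "cspan E \<subseteq> cspan (insert u E)"
      by (rule cspan_subset_cspan[OF E(1)]) (use cspan_base[of "insert u E"] E(1) in auto)
    have g_eq: "g = (\<lambda>n. complex_of_real r * u n + p n)"
      using r unfolding u_def w_def by (simp add: fun_eq_iff)
    have "g \<in> cspan (insert u E)" unfolding g_eq
      by (intro cspan_add cspan_scale) (use cspan_base[of "insert u E" u] E(1) sub pE in auto)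
    then show ?thesis using E E' sub u by (intro exI[of _ "insert u E"]) auto
  qed
qed

lemma gram_schmidt:
  "finite G \<Longrightarrow> G \<subseteq> l2 \<Longrightarrow> \<exists>E. finite E \<and> E \<subseteq> l2 \<and> orthonormal E \<and> G \<subseteq> cspan E"
proof (induction G rule: finite_induct)
  case empty
  show ?case by (rule exI[of _ "{}"]) (simp add: orthonormal_def)
next
  case (insert g G)
  obtain E where E: "finite E" "E \<subseteq> l2" "orthonormal E" "G \<subseteq> cspan E" using insert by auto
  have g: "g \<in> l2" using insert(4) by simp
  obtain E' where "finite E'" "E' \<subseteq> l2" "orthonormal E'" "cspan E \<subseteq> cspan E'" "g \<in> cspan E'"
    using orthonormal_extend[OF E(1-3) g] by blast
  then show ?case using E(4) by auto
qed

lemma sum_fun_apply: "(\<Sum>i\<in>I. f i) x = (\<Sum>i\<in>I. f i x)"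
  by (induction I rule: infinite_finite_induct) auto

interpretation vec_space: vector_space "\<lambda>(c::complex) (x::vec). (\<lambda>n. c * x n)"
  by unfold_locales (simp_all add: fun_eq_iff algebra_simps)

lemma cspan_eq_span: "finite S \<Longrightarrow> cspan S = vec_space.span S"
proof -
  assume S: "finite S"
  have "(\<Sum>v\<in>S. (\<lambda>n. u v * v n)) = (\<lambda>n. \<Sum>v\<in>S. u v * v n)" for u
    by (rule ext) (simp add: sum_fun_apply)
  then show ?thesis unfolding vec_space.span_finite[OF S] cspan_def by auto
qed

definition l2_subspace :: "vec set \<Rightarrow> bool" where
  "l2_subspace V \<longleftrightarrow> V \<subseteq> l2 \<and> (\<lambda>_. 0) \<in> V \<and> (\<forall>x\<in>V. \<forall>y\<in>V. (\<lambda>n. x n + y n) \<in> V) \<and> (\<forall>x\<in>V. \<forall>c. (\<lambda>n. c * x n) \<in> V)"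

lemma l2_subspace_imp_subspace: "l2_subspace V \<Longrightarrow> vec_space.subspace V"
  unfolding l2_subspace_def vec_space.subspace_def by (simp add: zero_fun_def plus_fun_def)

lemma l2_subspace_range: "bop T \<Longrightarrow> l2_subspace (T ` l2)"
  unfolding l2_subspace_def
proof (intro conjI ballI allI)
  assume T: "bop T"
  show "T ` l2 \<subseteq> l2" using bop_l2[OF T] by auto
  show "(\<lambda>_. 0) \<in> T ` l2" using bop_zero[OF T] l2_zero(1) by (metis image_eqI)
  fix x y assume "x \<in> T ` l2" "y \<in> T ` l2"
  then obtain a b where ab: "a \<in> l2" "b \<in> l2" "x = T a" "y = T b" by auto
  show "(\<lambda>n. x n + y n) \<in> T ` l2"
    using bop_add[OF T ab(1,2)] l2_add(1)[OF ab(1,2)] ab(3,4) by (metis image_eqI)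
next
  fix x c assume T: "bop T" and "x \<in> T ` l2"
  then obtain a where a: "a \<in> l2" "x = T a" by auto
  show "(\<lambda>n. c * x n) \<in> T ` l2"
    using bop_scale[OF T a(1)] l2_scale(1)[OF a(1)] a(2) by (metis image_eqI)
qed

lemma inj_on_if_kernel_trivial:
  assumes V: "l2_subspace V" and L: "bop L" and inj: "\<forall>x\<in>V. L x = (\<lambda>_. 0) \<longrightarrow> x = (\<lambda>_. 0)"
  shows "inj_on L V"
proof
  fix a b assume ab: "a \<in> V" "b \<in> V" "L a = L b"
  have abl: "a \<in> l2" "b \<in> l2" using ab V by (auto simp: l2_subspace_def)
  have d: "a - b \<in> V"
    using vec_space.subspace_diff[OF l2_subspace_imp_subspace[OF V]] ab by auto
  have "L (a - b) = (\<lambda>_. 0)" using bop_diff[OF L abl] ab(3) by (simp add: fun_diff_def)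
  then have "a - b = (\<lambda>_. 0)" using inj d by blast
  then show "a = b" by (simp add: fun_eq_iff)
qed

lemma independent_image_if_kernel_trivial:
  assumes V: "l2_subspace V" and L: "bop L" and inj: "\<forall>x\<in>V. L x = (\<lambda>_. 0) \<longrightarrow> x = (\<lambda>_. 0)"
    and B: "B \<subseteq> V" "vec_space.independent B"
  shows "vec_space.independent (L ` B)"
  unfolding vec_space.independent_explicit_finite_subsets
proof (intro allI impI ballI)
  have sV: "vec_space.subspace V" by (rule l2_subspace_imp_subspace[OF V])
  have Vl2: "V \<subseteq> l2" using V by (simp add: l2_subspace_def)
  fix S u v assume S: "S \<subseteq> L ` B" "finite S" and su: "(\<Sum>v\<in>S. (\<lambda>n. u v * v n)) = 0" and v: "v \<in> S"
  obtain S' where S': "S' \<subseteq> B" "finite S'" "S = L ` S'" using finite_subset_image[OF S(2,1)] by blast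
  have injS': "inj_on L S'" using inj_on_subset[OF inj_on_if_kernel_trivial[OF V L inj]] S'(1) B(1) by blast
  have fun_sum: "(\<Sum>b\<in>S'. (\<lambda>n. c b * f b n)) = (\<lambda>n. \<Sum>b\<in>S'. c b * f b n)" for c f
    by (rule ext) (simp add: sum_fun_apply)
  have "(\<Sum>v\<in>S. (\<lambda>n. u v * v n)) = (\<Sum>b\<in>S'. (\<lambda>n. u (L b) * L b n))"
    unfolding S'(3) by (rule sum.reindex[OF injS', unfolded o_def])
  also have "\<dots> = L (\<Sum>b\<in>S'. (\<lambda>n. u (L b) * b n))"
    unfolding fun_sum by (rule bop_sum[OF L S'(2), symmetric]) (use S'(1) B(1) Vl2 in auto)
  finally have L0: "L (\<Sum>b\<in>S'. (\<lambda>n. u (L b) * b n)) = (\<lambda>_. 0)" using su by (simp add: zero_fun_def)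
  have "(\<Sum>b\<in>S'. (\<lambda>n. u (L b) * b n)) \<in> V"
    by (rule vec_space.subspace_sum[OF sV]) (use vec_space.subspace_scale[OF sV] S'(1) B(1) in auto)
  then have s0: "(\<Sum>b\<in>S'. (\<lambda>n. u (L b) * b n)) = 0" using inj L0 by (simp add: zero_fun_def)
  have indB: "c b = 0" if "S \<subseteq> B" "finite S" "(\<Sum>v\<in>S. (\<lambda>n. c v * v n)) = 0" "b \<in> S" for S c b
    using B(2) that unfolding vec_space.independent_explicit_finite_subsets by blast
  obtain b where b: "b \<in> S'" "v = L b" using v S'(3) by auto
  show "u v = 0" using indB[OF S'(1,2) s0 b(1)] b(2) by simp
qed

lemma subspace_dim_le_if_injective_into_span:
  assumes V: "l2_subspace V" and L: "bop L" and G: "finite G" and img: "\<forall>x\<in>V. L x \<in> cspan G"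
    and inj: "\<forall>x\<in>V. L x = (\<lambda>_. 0) \<longrightarrow> x = (\<lambda>_. 0)"
  shows "\<exists>B. finite B \<and> B \<subseteq> V \<and> card B \<le> card G \<and> V \<subseteq> cspan B"
proof -
  obtain B where B: "B \<subseteq> V" "vec_space.independent B" "V \<subseteq> vec_space.span B"
    by (rule vec_space.basis_exists)
  have injB: "inj_on L B" using inj_on_subset[OF inj_on_if_kernel_trivial[OF V L inj] B(1)] .
  have "L ` B \<subseteq> vec_space.span G" using img B(1) cspan_eq_span[OF G] by auto
  then have "finite (L ` B) \<and> card (L ` B) \<le> card G"
    by (intro vec_space.independent_span_bound[OF G] independent_image_if_kernel_trivial[OF V L inj B(1,2)])
  then have "finite B" "card B \<le> card G" using finite_imageD[OF _ injB] card_image[OF injB] by auto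
  then show ?thesis using B(1,3) cspan_eq_span by blast
qed

lemma rk_witness:
  assumes "finite G" "G \<subseteq> l2" "T ` l2 \<subseteq> cspan G"
  shows "\<exists>G0. finite G0 \<and> card G0 = rk T \<and> G0 \<subseteq> l2 \<and> T ` l2 \<subseteq> cspan G0"
proof -
  have "\<exists>n F. finite F \<and> card F = n \<and> F \<subseteq> l2 \<and> T ` l2 \<subseteq> cspan F" using assms by blast
  then show ?thesis unfolding rk_def by (rule LeastI_ex)
qed

lemma rk_le_card:
  assumes "finite G" "G \<subseteq> l2" "T ` l2 \<subseteq> cspan G"
  shows "rk T \<le> card G"
  unfolding rk_def by (rule Least_le) (use assms in blast)

lemma kernel_vector_if_rk_less:
  assumes R: "bop R" and Q: "bop Q" and U: "bop U"
    and G: "finite G" "G \<subseteq> l2" "Q ` l2 \<subseteq> cspan G"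
    and lt: "rk Q < rk R"
  shows "\<exists>x\<in>R ` l2. x \<noteq> (\<lambda>_. 0) \<and> Q (U x) = (\<lambda>_. 0)"
proof (rule ccontr)
  assume "\<not> ?thesis"
  then have inj: "\<forall>x\<in>R ` l2. (Q \<circ> U) x = (\<lambda>_. 0) \<longrightarrow> x = (\<lambda>_. 0)" by auto
  obtain G0 where G0: "finite G0" "card G0 = rk Q" "G0 \<subseteq> l2" "Q ` l2 \<subseteq> cspan G0"
    using rk_witness[OF G] by blast
  have V: "l2_subspace (R ` l2)" by (rule l2_subspace_range[OF R])
  have Vl2: "R ` l2 \<subseteq> l2" using V by (simp add: l2_subspace_def)
  have img: "\<forall>x\<in>R ` l2. (Q \<circ> U) x \<in> cspan G0"
  proof
    fix x assume "x \<in> R ` l2"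
    then have "U x \<in> l2" using bop_l2[OF U] Vl2 by auto
    then show "(Q \<circ> U) x \<in> cspan G0" using G0(4) by auto
  qed
  obtain B where B: "finite B" "B \<subseteq> R ` l2" "card B \<le> card G0" "R ` l2 \<subseteq> cspan B"
    using subspace_dim_le_if_injective_into_span[OF V bop_comp[OF Q U] G0(1) img inj] by blast
  have "rk R \<le> card B" by (rule rk_le_card) (use B Vl2 in auto)
  then show False using B(3) G0(2) lt by simp
qed

lemma unit_kernel_vector_if_rk_less:
  assumes R: "bop R" and Q: "bop Q" and U: "bop U"
    and G: "finite G" "G \<subseteq> l2" "Q ` l2 \<subseteq> cspan G"
    and lt: "rk Q < rk R"
  shows "\<exists>x\<in>R ` l2. l2norm x = 1 \<and> Q (U x) = (\<lambda>_. 0)"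
proof -
  obtain x where x: "x \<in> R ` l2" "x \<noteq> (\<lambda>_. 0)" "Q (U x) = (\<lambda>_. 0)"
    using kernel_vector_if_rk_less[OF R Q U G lt] by blast
  have V: "l2_subspace (R ` l2)" by (rule l2_subspace_range[OF R])
  have xl: "x \<in> l2" using x(1) V by (auto simp: l2_subspace_def)
  define c where "c = complex_of_real (1 / l2norm x)"
  have "(\<lambda>n. c * x n) \<in> R ` l2" using V x(1) by (auto simp: l2_subspace_def)
  moreover have "l2norm (\<lambda>n. c * x n) = 1" unfolding c_def by (rule l2_normalize(2)[OF xl x(2)])
  moreover have "Q (U (\<lambda>n. c * x n)) = (\<lambda>_. 0)"
    using x(3) bop_scale[OF U xl] bop_scale[OF Q bop_l2[OF U xl]] by simp
  ultimately show ?thesis by blast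
qed

section \<open>Weakly null sequences and compact operators\<close>

definition weakly_null :: "(nat \<Rightarrow> vec) \<Rightarrow> bool" where
  "weakly_null y \<longleftrightarrow> (\<forall>k. y k \<in> l2) \<and> (\<forall>z\<in>l2. (\<lambda>k. l2inner z (y k)) \<longlonglongrightarrow> 0)"

lemma weakly_null_bop:
  assumes B: "bop B" and y: "weakly_null y"
  shows "weakly_null (\<lambda>k. B (y k))"
  unfolding weakly_null_def
proof (intro conjI allI ballI)
  have yl: "y k \<in> l2" for k using y by (simp add: weakly_null_def)
  show "B (y k) \<in> l2" for k using bop_l2[OF B yl] .
  fix z assume z: "z \<in> l2"
  have "l2inner z (B (y k)) = l2inner (adj B z) (y k)" for k using adj_inner_left[OF B z yl] by simp
  moreover have "(\<lambda>k. l2inner (adj B z) (y k)) \<longlonglongrightarrow> 0"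
    using y bop_l2[OF bop_adj[OF B] z] by (simp add: weakly_null_def)
  ultimately show "(\<lambda>k. l2inner z (B (y k))) \<longlonglongrightarrow> 0" by simp
qed

lemma weakly_null_subseq:
  assumes x: "weakly_null x" and s: "strict_mono s"
  shows "weakly_null (x \<circ> s)"
  unfolding weakly_null_def
proof (intro conjI allI ballI)
  show "(x \<circ> s) k \<in> l2" for k using x by (simp add: weakly_null_def)
  fix z assume "z \<in> l2"
  then have "(\<lambda>k. l2inner z (x k)) \<longlonglongrightarrow> 0" using x by (simp add: weakly_null_def)
  from LIMSEQ_subseq_LIMSEQ[OF this s] show "(\<lambda>k. l2inner z ((x \<circ> s) k)) \<longlonglongrightarrow> 0"
    by (simp add: o_def)
qed

lemma finite_rank_weakly_null_tendsto_0:
  assumes F: "bop F" "finite_rank F" and y: "weakly_null y"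
  shows "(\<lambda>k. l2norm (F (y k))) \<longlonglongrightarrow> 0"
proof -
  obtain G where G: "finite G" "G \<subseteq> l2" "F ` l2 \<subseteq> cspan G" using F(2) by (auto simp: finite_rank_def)
  obtain E where E: "finite E" "E \<subseteq> l2" "orthonormal E" "G \<subseteq> cspan E" using gram_schmidt[OF G(1,2)] by blast
  have yl: "y k \<in> l2" for k using y by (simp add: weakly_null_def)
  have inE: "F (y k) \<in> cspan E" for k using G(3) cspan_subset_cspan[OF G(1) E(4)] yl by auto
  have en: "l2norm v = 1" if "v \<in> E" for v
  proof -
    have "complex_of_real ((l2norm v)\<^sup>2) = 1" using l2inner_self[of v] E(2,3) that by (auto simp: orthonormal_def)
    then have "(l2norm v)\<^sup>2 = 1" by (metis of_real_eq_1_iff)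
    moreover have "l2norm v \<ge> 0" using l2norm_nonneg[of v] E(2) that by auto
    ultimately show ?thesis by (simp add: power2_eq_1_iff)
  qed
  have bnd: "l2norm (F (y k)) \<le> (\<Sum>v\<in>E. cmod (l2inner (adj F v) (y k)))" for k
  proof -
    have "l2norm (F (y k)) = l2norm (\<lambda>n. \<Sum>v\<in>E. l2inner v (F (y k)) * v n)"
      using orthonormal_expand[OF E(1-3) inE[of k]] by simp
    also have "\<dots> \<le> (\<Sum>v\<in>E. cmod (l2inner v (F (y k))) * l2norm v)"
      by (rule l2norm_sum_le) (use E in auto)
    also have "\<dots> = (\<Sum>v\<in>E. cmod (l2inner (adj F v) (y k)))"
      by (intro sum.cong refl) (use en adj_inner_left[OF F(1) _ yl] E(2) in auto)
    finally show ?thesis .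
  qed
  have "(\<lambda>k. \<Sum>v\<in>E. cmod (l2inner (adj F v) (y k))) \<longlonglongrightarrow> (\<Sum>v\<in>E. 0)"
  proof (rule tendsto_sum)
    fix v assume v: "v \<in> E"
    have "adj F v \<in> l2" using bop_l2[OF bop_adj[OF F(1)]] E(2) v by auto
    then have "(\<lambda>k. l2inner (adj F v) (y k)) \<longlonglongrightarrow> 0" using y by (simp add: weakly_null_def)
    then show "(\<lambda>k. cmod (l2inner (adj F v) (y k))) \<longlonglongrightarrow> 0" using tendsto_norm_zero by blast
  qed
  then have "(\<lambda>k. \<Sum>v\<in>E. cmod (l2inner (adj F v) (y k))) \<longlonglongrightarrow> 0" by simp
  then show ?thesis
    by (rule tendsto_0_if_eventually_norm_le[rotated]) (use bnd l2norm_nonneg[OF bop_l2[OF F(1) yl]] in auto)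
qed

lemma compact_op_weakly_null_tendsto_0:
  assumes T: "bop T" "compact_op T" and y: "weakly_null y" and M: "\<And>k. l2norm (y k) \<le> M"
  shows "(\<lambda>k. l2norm (T (y k))) \<longlonglongrightarrow> 0"
proof (rule tendstoI)
  fix e :: real assume e: "e > 0"
  have yl: "y k \<in> l2" for k using y by (simp add: weakly_null_def)
  have M0: "M \<ge> 0" using M l2norm_nonneg[OF yl] order_trans by blast
  define d where "d = e / (2 * (M + 1))"
  have d: "d > 0" unfolding d_def using e M0 by simp
  obtain F where F: "bop F" "finite_rank F" "\<forall>x\<in>l2. l2norm (T x - F x) \<le> d * l2norm x"
    using T(2) d unfolding compact_op_def by blast
  have ev: "eventually (\<lambda>k. l2norm (F (y k)) < e / 2) sequentially"
  proof -
    have "eventually (\<lambda>k. dist (l2norm (F (y k))) 0 < e / 2) sequentially"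
      using finite_rank_weakly_null_tendsto_0[OF F(1,2) y] e by (intro tendstoD) auto
    then show ?thesis by eventually_elim (simp add: dist_real_def)
  qed
  show "eventually (\<lambda>k. dist (l2norm (T (y k))) 0 < e) sequentially"
    using ev
  proof eventually_elim
    case (elim k)
    have Ty: "T (y k) \<in> l2" "F (y k) \<in> l2" using bop_l2 T F yl by auto
    have dm: "(\<lambda>n. T (y k) n - F (y k) n) \<in> l2" by (rule l2_diff(1)[OF Ty])
    have "T (y k) = (\<lambda>n. (T (y k) n - F (y k) n) + F (y k) n)" by simp
    then have "l2norm (T (y k)) \<le> l2norm (\<lambda>n. T (y k) n - F (y k) n) + l2norm (F (y k))"
      using l2_add(2)[OF dm Ty(2)] by simp
    also have "l2norm (\<lambda>n. T (y k) n - F (y k) n) \<le> d * l2norm (y k)"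
      using F(3) yl by (simp add: fun_diff_def)
    also have "d * l2norm (y k) \<le> d * (M + 1)" using M[of k] d by (intro mult_left_mono) auto
    also have "d * (M + 1) = e / 2" unfolding d_def using M0 by (simp add: field_simps)
    finally have "l2norm (T (y k)) < e" using elim by simp
    then show ?case using l2norm_nonneg[OF Ty(1)] by simp
  qed
qed

lemma finite_rank_uminus_op:
  assumes "finite_rank F" shows "finite_rank (\<lambda>x n. - F x n)"
proof -
  obtain G where G: "finite G" "G \<subseteq> l2" "F ` l2 \<subseteq> cspan G" using assms by (auto simp: finite_rank_def)
  have "(\<lambda>n. - F x n) \<in> cspan G" if "x \<in> l2" for x
    using cspan_scale[of "F x" G "-1"] G(3) that by auto
  then show ?thesis unfolding finite_rank_def using G(1,2) by blast
qed

lemma compact_op_opminus_commute: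
  assumes "compact_op (opminus A B)" shows "compact_op (opminus B A)"
  unfolding compact_op_def
proof (intro allI impI)
  fix e :: real assume "e > 0"
  then obtain F where F: "bop F" "finite_rank F" "\<forall>x\<in>l2. l2norm (opminus A B x - F x) \<le> e * l2norm x"
    using assms unfolding compact_op_def by blast
  have "l2norm (opminus B A x - (\<lambda>n. - F x n)) = l2norm (opminus A B x - F x)" for x
  proof -
    have eq: "opminus B A x - (\<lambda>n. - F x n) = (\<lambda>n. - (opminus A B x - F x) n)"
      by (simp add: opminus_def fun_eq_iff)
    show ?thesis unfolding eq by (rule l2norm_neg)
  qed
  then have "\<forall>x\<in>l2. l2norm (opminus B A x - (\<lambda>n. - F x n)) \<le> e * l2norm x"
    using F(3) by simp
  then show "\<exists>F. bop F \<and> finite_rank F \<and> (\<forall>x\<in>l2. l2norm (opminus B A x - F x) \<le> e * l2norm x)"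
    using bop_uminus_op[OF F(1)] finite_rank_uminus_op[OF F(2)] by blast
qed

lemma compact_idem_finite_rank:
  assumes Q: "bop Q" "compact_op Q" "\<forall>z. Q (Q z) = Q z"
  shows "\<exists>G. finite G \<and> G \<subseteq> l2 \<and> Q ` l2 \<subseteq> cspan G"
proof -
  obtain F where F: "bop F" "finite_rank F" "\<forall>x\<in>l2. l2norm (Q x - F x) \<le> (1/2) * l2norm x"
    using Q(2) unfolding compact_op_def by (meson divide_pos_pos zero_less_one zero_less_numeral)
  obtain GF where GF: "finite GF" "GF \<subseteq> l2" "F ` l2 \<subseteq> cspan GF" using F(2) by (auto simp: finite_rank_def)
  have V: "l2_subspace (Q ` l2)" by (rule l2_subspace_range[OF Q(1)])
  have Vl2: "Q ` l2 \<subseteq> l2" using V by (simp add: l2_subspace_def)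
  have inj: "\<forall>x\<in>Q ` l2. F x = (\<lambda>_. 0) \<longrightarrow> x = (\<lambda>_. 0)"
  proof (intro ballI impI)
    fix x assume x: "x \<in> Q ` l2" and Fx: "F x = (\<lambda>_. 0)"
    have xl: "x \<in> l2" using x Vl2 by auto
    have Qx: "Q x = x" using x Q(3) by auto
    have h: "l2norm (Q x - F x) \<le> (1/2) * l2norm x" using F(3) xl by blast
    have "Q x - F x = x" using Qx Fx by (simp add: fun_diff_def)
    then have "l2norm x \<le> (1/2) * l2norm x" using h by simp
    then have "l2norm x = 0" using l2norm_nonneg[OF xl] by simp
    then show "x = (\<lambda>_. 0)" using l2norm_eq_0_iff[OF xl] by simp
  qed
  obtain B where B: "finite B" "B \<subseteq> Q ` l2" "Q ` l2 \<subseteq> cspan B"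
    using subspace_dim_le_if_injective_into_span[OF V F(1) GF(1) _ inj] GF(3) Vl2 by blast
  then show ?thesis using Vl2 by blast
qed

section \<open>Representations of bounded sequences\<close>

definition chi :: "nat set \<Rightarrow> vec" where
  "chi A = (\<lambda>n. if n \<in> A then 1 else 0)"

lemma Pk_chi: "Pk k = chi {k}"
  by (simp add: Pk_def chi_def fun_eq_iff)

lemma chi_linf: "chi A \<in> linf"
  unfolding linf_def chi_def by (rule CollectI, rule exI[of _ 1]) simp

lemma chi_c0: "finite A \<Longrightarrow> chi A \<in> c0"
proof -
  assume A: "finite A"
  have "eventually (\<lambda>n. chi A n = 0) sequentially"
  proof -
    obtain N where "\<forall>n\<in>A. n < N" using A finite_nat_set_iff_bounded by auto
    then show ?thesis unfolding eventually_sequentially chi_def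
      by (intro exI[of _ N]) auto
  qed
  then have "chi A \<longlonglongrightarrow> 0" by (rule tendsto_eventually)
  then show ?thesis by (simp add: c0_def)
qed

lemma chi_mult: "(\<lambda>n. chi A n * chi B n) = chi (A \<inter> B)"
  by (simp add: chi_def fun_eq_iff)

lemma chi_add: "A \<inter> B = {} \<Longrightarrow> (\<lambda>n. chi A n + chi B n) = chi (A \<union> B)"
  by (auto simp: chi_def fun_eq_iff)

lemma chi_cnj: "(\<lambda>n. cnj (chi A n)) = chi A"
  by (simp add: chi_def fun_eq_iff)

lemma chi_UNIV: "chi UNIV = (\<lambda>_. 1)"
  by (simp add: chi_def)

locale star_rep =
  fixes \<Phi> :: "vec \<Rightarrow> op"
  assumes hom: "unital_star_hom \<Phi>"
begin

lemma bop_proj: "bop (\<Phi> (chi A))"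
  using hom chi_linf by (simp add: unital_star_hom_def)

lemma proj_mult: "\<Phi> (chi A) (\<Phi> (chi B) z) = \<Phi> (chi (A \<inter> B)) z"
proof -
  have "\<Phi> (\<lambda>n. chi A n * chi B n) = \<Phi> (chi A) \<circ> \<Phi> (chi B)"
    using hom chi_linf by (simp add: unital_star_hom_def)
  then show ?thesis unfolding chi_mult by simp
qed

lemma proj_Un: "A \<inter> B = {} \<Longrightarrow> \<Phi> (chi (A \<union> B)) z = (\<lambda>n. \<Phi> (chi A) z n + \<Phi> (chi B) z n)"
proof -
  assume d: "A \<inter> B = {}"
  have "\<Phi> (\<lambda>n. chi A n + chi B n) = (\<lambda>x n. \<Phi> (chi A) x n + \<Phi> (chi B) x n)"
    using hom chi_linf by (simp add: unital_star_hom_def)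
  then show ?thesis unfolding chi_add[OF d] by simp
qed

lemma adj_proj: "adj (\<Phi> (chi A)) = \<Phi> (chi A)"
proof -
  have "\<Phi> (\<lambda>n. cnj (chi A n)) = adj (\<Phi> (chi A))"
    using hom chi_linf by (simp add: unital_star_hom_def)
  then show ?thesis unfolding chi_cnj by simp
qed

lemma proj_selfadj: "x \<in> l2 \<Longrightarrow> y \<in> l2 \<Longrightarrow> l2inner (\<Phi> (chi A) x) y = l2inner x (\<Phi> (chi A) y)"
  using adj_inner_right[OF bop_proj, of x y A] adj_proj by simp

lemma proj_UNIV: "\<Phi> (chi UNIV) = ident"
  using hom by (simp add: unital_star_hom_def chi_UNIV)

lemma proj_empty: "\<Phi> (chi {}) z = (\<lambda>_. 0)"
proof -
  have sc: "\<forall>a\<in>linf. \<forall>c. \<Phi> (\<lambda>n. c * a n) = (\<lambda>x n. c * \<Phi> a x n)"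
    using hom by (simp add: unital_star_hom_def)
  have f: "\<Phi> (\<lambda>n. 0 * chi {} n) = (\<lambda>x n. 0 * \<Phi> (chi {}) x n)"
    using bspec[OF sc chi_linf[of "{}"], THEN spec[of _ 0]] .
  have c: "(\<lambda>n. 0 * chi {} n) = chi {}" by (simp add: chi_def)
  from f have "\<Phi> (chi {}) = (\<lambda>x n. 0)" unfolding c by simp
  then show ?thesis by simp
qed

lemma proj_l2: "z \<in> l2 \<Longrightarrow> \<Phi> (chi A) z \<in> l2"
  by (rule bop_l2[OF bop_proj])

lemma proj_idem: "\<Phi> (chi A) (\<Phi> (chi A) z) = \<Phi> (chi A) z"
  using proj_mult[of A A z] by simp

lemma proj_norm_le: assumes z: "z \<in> l2" shows "l2norm (\<Phi> (chi A) z) \<le> l2norm z"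
proof -
  let ?p = "\<Phi> (chi A) z"
  have p: "?p \<in> l2" using proj_l2[OF z] .
  have "complex_of_real ((l2norm ?p)\<^sup>2) = l2inner ?p ?p" using l2inner_self[OF p] by simp
  also have "\<dots> = l2inner z (\<Phi> (chi A) ?p)" using proj_selfadj[OF z p] .
  also have "\<dots> = l2inner z ?p" using proj_idem by simp
  finally have "(l2norm ?p)\<^sup>2 = cmod (l2inner z ?p)"
    by (metis norm_of_real abs_of_nonneg zero_le_power2)
  also have "\<dots> \<le> l2norm z * l2norm ?p" by (rule l2_Cauchy_Schwarz[OF z p])
  finally have "l2norm ?p * l2norm ?p \<le> l2norm z * l2norm ?p" by (simp add: power2_eq_square)
  then show ?thesis using l2norm_nonneg[OF p] l2norm_nonneg[OF z]
    by (metis mult_right_le_imp_le order_le_less mult_zero_right)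
qed

lemma proj_norm_mono: assumes z: "z \<in> l2" and AB: "A \<subseteq> B"
  shows "l2norm (\<Phi> (chi A) z) \<le> l2norm (\<Phi> (chi B) z)"
proof -
  have "\<Phi> (chi A) z = \<Phi> (chi A) (\<Phi> (chi B) z)" using proj_mult[of A B z] AB
    by (simp add: Int_absorb2)
  then show ?thesis using proj_norm_le[OF proj_l2[OF z]] by simp
qed

lemma proj_Compl: assumes z: "z \<in> l2" shows "\<Phi> (chi (- A)) z = (\<lambda>n. z n - \<Phi> (chi A) z n)"
proof -
  have "\<Phi> (chi (A \<union> - A)) z = (\<lambda>n. \<Phi> (chi A) z n + \<Phi> (chi (- A)) z n)"
    by (rule proj_Un) auto
  moreover have "\<Phi> (chi (A \<union> - A)) z = z" using proj_UNIV z by (simp add: ident_def)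
  ultimately have "z = (\<lambda>n. \<Phi> (chi A) z n + \<Phi> (chi (- A)) z n)" by simp
  then show ?thesis by (simp add: fun_eq_iff algebra_simps)
qed

lemma proj_fixed_mono:
  assumes "A \<subseteq> B" "\<Phi> (chi A) z = z"
  shows "\<Phi> (chi B) z = z"
  using proj_mult[of B A z] assms by (simp add: Int_absorb1 Int_absorb2)

lemma proj_range_subseq_norm_le:
  assumes s: "strict_mono s" and z: "z \<in> l2" and kill: "\<Phi> (chi {s i}) z = (\<lambda>_. 0)"
    and before: "\<And>j. i = Suc j \<Longrightarrow> l2norm (\<Phi> (chi {..s j}) z) \<le> e"
    and after: "l2norm (\<Phi> (chi {s (Suc i)..}) z) \<le> e"
  shows "l2norm (\<Phi> (chi (range s)) z) \<le> 2 * e"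
proof -
  define A where "A = range s \<inter> {..<s i}"
  define B where "B = range s \<inter> {s i<..}"
  have "range s = A \<union> ({s i} \<union> B)" unfolding A_def B_def by auto
  moreover have "A \<inter> ({s i} \<union> B) = {}" "{s i} \<inter> B = {}" unfolding A_def B_def by auto
  ultimately have split: "\<Phi> (chi (range s)) z = (\<lambda>n. \<Phi> (chi A) z n + \<Phi> (chi B) z n)"
    using proj_Un[of A "{s i} \<union> B" z] proj_Un[of "{s i}" B z] kill by simp
  have "B \<subseteq> {s (Suc i)..}"
    using s by (auto simp: B_def strict_mono_less[OF s] strict_mono_less_eq[OF s] Suc_le_eq)
  then have B_small: "l2norm (\<Phi> (chi B) z) \<le> e"
    using proj_norm_mono[OF z] after order_trans by blast
  have A_small: "l2norm (\<Phi> (chi A) z) \<le> e"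
  proof (cases i)
    case 0
    then have "A = {}" by (auto simp: A_def strict_mono_less[OF s])
    then show ?thesis
      using proj_empty l2_zero(2) order_trans[OF l2norm_nonneg[OF proj_l2[OF z]] after] by simp
  next
    case (Suc j)
    have "A \<subseteq> {..s j}"
      using Suc by (auto simp: A_def strict_mono_less[OF s] strict_mono_less_eq[OF s] less_Suc_eq_le)
    then show ?thesis using proj_norm_mono[OF z] before[OF Suc] order_trans by blast
  qed
  have "l2norm (\<Phi> (chi (range s)) z) \<le> l2norm (\<Phi> (chi A) z) + l2norm (\<Phi> (chi B) z)"
    unfolding split by (rule l2_add(2)[OF proj_l2[OF z] proj_l2[OF z]])
  with A_small B_small show ?thesis by simp
qed

end

lemma diag_chi_lessThan: "x \<in> l2 \<Longrightarrow> diag (chi {..<N}) x = trunc N x"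
  by (simp add: diag_def chi_def trunc_def fun_eq_iff)

lemma diag_one: "x \<in> l2 \<Longrightarrow> diag (\<lambda>_. 1) x = x"
  by (simp add: diag_def)

locale strong_star_rep = star_rep +
  assumes strong: "strongly_continuous \<Phi>"
begin

lemma proj_lessThan_tendsto: assumes z: "z \<in> l2"
  shows "(\<lambda>N. l2norm (\<lambda>n. \<Phi> (chi {..<N}) z n - z n)) \<longlonglongrightarrow> 0"
proof -
  define F where "F = filtermap (\<lambda>N. chi {..<N}) sequentially"
  have one: "(\<lambda>_. 1) \<in> linf" using chi_linf[of UNIV] by (simp add: chi_UNIV)
  have Fle: "F \<le> principal linf" unfolding F_def le_principal eventually_filtermap
    using chi_linf by simp
  have hyp: "\<forall>x\<in>l2. ((\<lambda>a. l2norm (\<lambda>n. diag a x n - diag (\<lambda>_. 1) x n)) \<longlongrightarrow> 0) F"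
  proof
    fix x assume x: "x \<in> l2"
    have "((\<lambda>N. l2norm (\<lambda>n. diag (chi {..<N}) x n - diag (\<lambda>_. 1) x n)) \<longlongrightarrow> 0) sequentially"
      using l2norm_tail_tendsto_0[OF x] l2norm_diff_commute
      by (simp add: diag_chi_lessThan[OF x] diag_one[OF x])
    then show "((\<lambda>a. l2norm (\<lambda>n. diag a x n - diag (\<lambda>_. 1) x n)) \<longlongrightarrow> 0) F"
      unfolding F_def tendsto_compose_filtermap[symmetric] by (simp add: o_def)
  qed
  have "((\<lambda>a. l2norm (\<lambda>n. \<Phi> a z n - \<Phi> (\<lambda>_. 1) z n)) \<longlongrightarrow> 0) F"
    using strong one Fle hyp z unfolding strongly_continuous_def by blast
  then have "((\<lambda>N. l2norm (\<lambda>n. \<Phi> (chi {..<N}) z n - \<Phi> (\<lambda>_. 1) z n)) \<longlongrightarrow> 0) sequentially"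
    unfolding F_def tendsto_compose_filtermap[symmetric] by (simp add: o_def)
  moreover have "\<Phi> (\<lambda>_. 1) z = z" using proj_UNIV z by (simp add: chi_UNIV ident_def)
  ultimately show ?thesis by simp
qed

lemma proj_atLeast_tendsto_0: assumes z: "z \<in> l2"
  shows "(\<lambda>N. l2norm (\<Phi> (chi {N..}) z)) \<longlonglongrightarrow> 0"
proof -
  have "\<Phi> (chi {N..}) z = (\<lambda>n. z n - \<Phi> (chi {..<N}) z n)" for N
    using proj_Compl[OF z, of "{..<N}"] by (simp add: Compl_lessThan)
  then show ?thesis using proj_lessThan_tendsto[OF z] l2norm_diff_commute by simp
qed

lemma proj_single_tendsto_0: assumes z: "z \<in> l2"
  shows "(\<lambda>k. l2norm (\<Phi> (chi {k}) z)) \<longlonglongrightarrow> 0"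
proof (rule tendsto_0_if_eventually_norm_le[OF _ proj_atLeast_tendsto_0[OF z]])
  have "norm (l2norm (\<Phi> (chi {k}) z)) \<le> l2norm (\<Phi> (chi {k..}) z)" for k
    using proj_norm_mono[OF z, of "{k}" "{k..}"] l2norm_nonneg[OF proj_l2[OF z]] by simp
  then show "eventually (\<lambda>k. norm (l2norm (\<Phi> (chi {k}) z)) \<le> l2norm (\<Phi> (chi {k..}) z)) sequentially"
    by simp
qed

lemma weakly_null_if_proj_single_fixed:
  assumes x: "\<And>k. x k \<in> l2" "\<And>k. \<Phi> (chi {k}) (x k) = x k" "\<And>k. l2norm (x k) \<le> M"
  shows "weakly_null x"
  unfolding weakly_null_def
proof (intro conjI allI ballI)
  show "x k \<in> l2" for k by (rule x(1))
  fix z assume z: "z \<in> l2"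
  have "norm (l2inner z (x k)) \<le> l2norm (\<Phi> (chi {k}) z) * M" for k
  proof -
    have "l2inner z (x k) = l2inner (\<Phi> (chi {k}) z) (x k)"
      using proj_selfadj[OF z x(1), of "{k}"] x(2) by simp
    then have "norm (l2inner z (x k)) \<le> l2norm (\<Phi> (chi {k}) z) * l2norm (x k)"
      using l2_Cauchy_Schwarz[OF proj_l2[OF z] x(1)] by simp
    also have "\<dots> \<le> l2norm (\<Phi> (chi {k}) z) * M"
      by (intro mult_left_mono x(3) l2norm_nonneg proj_l2 z)
    finally show ?thesis .
  qed
  then have "eventually (\<lambda>k. norm (l2inner z (x k)) \<le> l2norm (\<Phi> (chi {k}) z) * M) sequentially"
    by simp
  moreover have "(\<lambda>k. l2norm (\<Phi> (chi {k}) z) * M) \<longlonglongrightarrow> 0"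
    using tendsto_mult_left_zero[OF proj_single_tendsto_0[OF z]] by simp
  ultimately show "(\<lambda>k. l2inner z (x k)) \<longlonglongrightarrow> 0"
    by (rule tendsto_0_if_eventually_norm_le)
qed

text \<open>A gliding hump: each new index is taken so late that the earlier vectors have almost no
  mass beyond it, and the new vector has almost no mass up to the previous index.\<close>

lemma gliding_hump:
  assumes compact: "\<forall>a\<in>c0. compact_op (\<Phi> a)"
    and z: "weakly_null z" "\<And>k. l2norm (z k) \<le> M"
    and K: "\<And>N. \<exists>k\<ge>N. k \<in> K" and e: "e > 0"
  obtains s where "strict_mono s" "\<And>i. s i \<in> K"
    "\<And>i. l2norm (\<Phi> (chi {..s i}) (z (s (Suc i)))) \<le> e"
    "\<And>i. l2norm (\<Phi> (chi {s (Suc i)..}) (z (s i))) \<le> e"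
proof -
  have zl: "z k \<in> l2" for k using z(1) by (simp add: weakly_null_def)
  define small where "small m k \<longleftrightarrow> m < k \<and> l2norm (\<Phi> (chi {..m}) (z k)) \<le> e
      \<and> l2norm (\<Phi> (chi {k..}) (z m)) \<le> e" for m k
  have ev: "eventually (small m) sequentially" for m
  proof -
    have "(\<lambda>k. l2norm (\<Phi> (chi {..m}) (z k))) \<longlonglongrightarrow> 0"
      by (rule compact_op_weakly_null_tendsto_0[OF bop_proj _ z]) (use compact chi_c0 in auto)
    then have "eventually (\<lambda>k. l2norm (\<Phi> (chi {..m}) (z k)) < e) sequentially"
      using e by (rule order_tendstoD)
    moreover have "eventually (\<lambda>k. l2norm (\<Phi> (chi {k..}) (z m)) < e) sequentially"
      using proj_atLeast_tendsto_0[OF zl] e by (rule order_tendstoD)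
    moreover have "eventually (\<lambda>k. m < k) sequentially" by (rule eventually_gt_at_top)
    ultimately show ?thesis by eventually_elim (auto simp: small_def)
  qed
  have step: "\<exists>k. k \<in> K \<and> small m k" for m
  proof -
    obtain N where "\<forall>k\<ge>N. small m k" using ev[of m] unfolding eventually_sequentially by blast
    moreover obtain k where "k \<ge> N" "k \<in> K" using K by blast
    ultimately show ?thesis by blast
  qed
  obtain k0 where "k0 \<in> K" using K by blast
  then obtain s where s: "\<And>i. s i \<in> K \<and> small (s i) (s (Suc i))"
    using dependent_nat_choice[of "\<lambda>_ k. k \<in> K" "\<lambda>_. small"] step by blast
  show ?thesis
  proof
    show "strict_mono s" unfolding strict_mono_Suc_iff using s by (simp add: small_def)
  qed (use s in \<open>auto simp: small_def\<close>)
qed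

end

section \<open>Partial isometries of finite index\<close>

definition defect :: "op \<Rightarrow> op" where
  "defect v = opminus ident (adj v \<circ> v)"

lemma bop_defect: "bop v \<Longrightarrow> bop (defect v)"
  unfolding defect_def by (intro bop_opminus bop_ident bop_comp bop_adj)

lemma adj_comp_eq_diff_defect: "bop v \<Longrightarrow> x \<in> l2 \<Longrightarrow> adj v (v x) = (\<lambda>n. x n - defect v x n)"
  by (simp add: defect_def opminus_def ident_l2)

lemma l2norm_sq_eq_defect:
  assumes v: "bop v" and x: "x \<in> l2"
  shows "(l2norm (v x))\<^sup>2 = (l2norm x)\<^sup>2 - Re (l2inner x (defect v x))"
proof -
  have vx: "v x \<in> l2" using bop_l2[OF v x] .
  have dx: "defect v x \<in> l2" using bop_l2[OF bop_defect[OF v] x] .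
  have "complex_of_real ((l2norm (v x))\<^sup>2) = l2inner (v x) (v x)" using l2inner_self[OF vx] by simp
  also have "\<dots> = l2inner x (adj v (v x))" by (rule adj_inner_right[OF v x vx])
  also have "\<dots> = l2inner x x - l2inner x (defect v x)"
    unfolding adj_comp_eq_diff_defect[OF v x] by (rule l2inner_diff_right[OF x dx x])
  also have "\<dots> = complex_of_real ((l2norm x)\<^sup>2) - l2inner x (defect v x)" using l2inner_self[OF x] by simp
  finally have "complex_of_real ((l2norm (v x))\<^sup>2) = complex_of_real ((l2norm x)\<^sup>2) - l2inner x (defect v x)" .
  then have "Re (complex_of_real ((l2norm (v x))\<^sup>2)) = Re (complex_of_real ((l2norm x)\<^sup>2) - l2inner x (defect v x))"
    by simp
  then show ?thesis by simp
qed

lemma l2norm_sq_bounds_defect: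
  assumes v: "bop v" and x: "x \<in> l2"
  shows "(l2norm (v x))\<^sup>2 \<ge> (l2norm x)\<^sup>2 - l2norm x * l2norm (defect v x)"
    "(l2norm (v x))\<^sup>2 \<le> (l2norm x)\<^sup>2 + l2norm x * l2norm (defect v x)"
proof -
  have dx: "defect v x \<in> l2" using bop_l2[OF bop_defect[OF v] x] .
  have "\<bar>Re (l2inner x (defect v x))\<bar> \<le> l2norm x * l2norm (defect v x)"
    using abs_Re_le_cmod[of "l2inner x (defect v x)"] l2_Cauchy_Schwarz[OF x dx] by linarith
  then show "(l2norm (v x))\<^sup>2 \<ge> (l2norm x)\<^sup>2 - l2norm x * l2norm (defect v x)"
    "(l2norm (v x))\<^sup>2 \<le> (l2norm x)\<^sup>2 + l2norm x * l2norm (defect v x)"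
    using l2norm_sq_eq_defect[OF v x] by linarith+
qed

lemma finite_index_pi_bop_defect:
  assumes "finite_index_pi v"
  shows "bop v" "finite_rank (defect v)"
  using assms by (auto simp: finite_index_pi_def partial_isometry_def defect_def)

section \<open>Comparison of the ranks\<close>

lemma proj_killed_unit_vectors:
  assumes \<Phi>1: "star_rep \<Phi>1" and compact1: "\<forall>a\<in>c0. compact_op (\<Phi>1 a)"
    and \<Phi>2: "star_rep \<Phi>2" and U: "bop U"
  obtains x where "\<And>k. x k \<in> l2" "\<And>k. \<Phi>2 (chi {k}) (x k) = x k" "\<And>k. l2norm (x k) \<le> 1"
    "\<And>k. rk (\<Phi>1 (chi {k})) < rk (\<Phi>2 (chi {k})) \<Longrightarrow>
       l2norm (x k) = 1 \<and> \<Phi>1 (chi {k}) (U (x k)) = (\<lambda>_. 0)"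
proof -
  interpret P1: star_rep \<Phi>1 by (rule \<Phi>1)
  interpret P2: star_rep \<Phi>2 by (rule \<Phi>2)
  define good where "good k x \<longleftrightarrow>
    x \<in> \<Phi>2 (chi {k}) ` l2 \<and> l2norm x = 1 \<and> \<Phi>1 (chi {k}) (U x) = (\<lambda>_. 0)" for k x
  have ex: "\<exists>x. good k x" if "rk (\<Phi>1 (chi {k})) < rk (\<Phi>2 (chi {k}))" for k
  proof -
    have "compact_op (\<Phi>1 (chi {k}))" using compact1 chi_c0[of "{k}"] by simp
    moreover have "\<forall>z. \<Phi>1 (chi {k}) (\<Phi>1 (chi {k}) z) = \<Phi>1 (chi {k}) z" by (simp add: P1.proj_idem)
    ultimately have "\<exists>G. finite G \<and> G \<subseteq> l2 \<and> \<Phi>1 (chi {k}) ` l2 \<subseteq> cspan G"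
      by (rule compact_idem_finite_rank[OF P1.bop_proj])
    then obtain G where "finite G" "G \<subseteq> l2" "\<Phi>1 (chi {k}) ` l2 \<subseteq> cspan G" by blast
    from unit_kernel_vector_if_rk_less[OF P2.bop_proj P1.bop_proj U this that]
    show ?thesis by (auto simp: good_def)
  qed
  define f where "f k = (SOME x. good k x)" for k
  have f: "good k (f k)" if "rk (\<Phi>1 (chi {k})) < rk (\<Phi>2 (chi {k}))" for k
    unfolding f_def by (rule someI_ex[OF ex[OF that]])
  define x where "x k = (if rk (\<Phi>1 (chi {k})) < rk (\<Phi>2 (chi {k})) then f k else (\<lambda>_. 0))" for k
  show ?thesis
  proof (rule that)
    show "x k \<in> l2" for k
      using f[of k] P2.proj_l2 l2_zero(1) by (auto simp: x_def good_def)
    show "\<Phi>2 (chi {k}) (x k) = x k" for k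
      using f[of k] by (auto simp: x_def good_def P2.proj_idem bop_zero[OF P2.bop_proj])
    show "l2norm (x k) \<le> 1" for k
      using f[of k] l2_zero(2) by (auto simp: x_def good_def)
    show "l2norm (x k) = 1 \<and> \<Phi>1 (chi {k}) (U (x k)) = (\<lambda>_. 0)"
      if "rk (\<Phi>1 (chi {k})) < rk (\<Phi>2 (chi {k}))" for k
      using f[OF that] that by (simp add: x_def good_def)
  qed
qed

lemma compressed_unit_sequence_if_rk_frequently_less:
  assumes \<Phi>1: "strong_star_rep \<Phi>1" and compact1: "\<forall>a\<in>c0. compact_op (\<Phi>1 a)"
    and \<Phi>2: "strong_star_rep \<Phi>2" and U: "bop U"
    and frequent: "\<And>N. \<exists>k\<ge>N. rk (\<Phi>1 (chi {k})) < rk (\<Phi>2 (chi {k}))"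
  obtains S X where "weakly_null X" "\<And>i. l2norm (X i) = 1" "\<And>i. \<Phi>2 (chi S) (X i) = X i"
    "\<And>i. l2norm (\<Phi>1 (chi S) (U (X i))) \<le> 1/4"
proof -
  interpret P1: strong_star_rep \<Phi>1 by (rule \<Phi>1)
  interpret P2: strong_star_rep \<Phi>2 by (rule \<Phi>2)
  obtain x where xl2: "\<And>k. x k \<in> l2" and xfix: "\<And>k. \<Phi>2 (chi {k}) (x k) = x k"
    and xle: "\<And>k. l2norm (x k) \<le> 1"
    and xkill: "\<And>k. rk (\<Phi>1 (chi {k})) < rk (\<Phi>2 (chi {k})) \<Longrightarrow>
      l2norm (x k) = 1 \<and> \<Phi>1 (chi {k}) (U (x k)) = (\<lambda>_. 0)"
    by (rule proj_killed_unit_vectors[OF strong_star_rep.axioms(1)[OF \<Phi>1] compact1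
          strong_star_rep.axioms(1)[OF \<Phi>2] U]) blast
  define Kset where "Kset = {k. rk (\<Phi>1 (chi {k})) < rk (\<Phi>2 (chi {k}))}"
  have wx: "weakly_null x" by (rule P2.weakly_null_if_proj_single_fixed[OF xl2 xfix xle])
  obtain C where Ux_le: "\<And>k. l2norm (U (x k)) \<le> C"
    by (rule bop_image_bounded[of U x, OF U xl2 xle]) blast
  obtain s where s: "strict_mono s" "\<And>i. s i \<in> Kset"
    and before: "\<And>i. l2norm (\<Phi>1 (chi {..s i}) (U (x (s (Suc i))))) \<le> 1/8"
    and after: "\<And>i. l2norm (\<Phi>1 (chi {s (Suc i)..}) (U (x (s i)))) \<le> 1/8"
    by (rule P1.gliding_hump[OF compact1 weakly_null_bop[OF U wx] Ux_le, of Kset "1/8"])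
      (use frequent in \<open>auto simp: Kset_def\<close>)
  show ?thesis
  proof (rule that[of "x \<circ> s" "range s"])
    show "weakly_null (x \<circ> s)" by (rule weakly_null_subseq[OF wx s(1)])
    show "l2norm ((x \<circ> s) i) = 1" for i using xkill s(2)[of i] by (simp add: Kset_def)
    show "\<Phi>2 (chi (range s)) ((x \<circ> s) i) = (x \<circ> s) i" for i
      using P2.proj_fixed_mono[OF _ xfix] by simp
    show "l2norm (\<Phi>1 (chi (range s)) (U ((x \<circ> s) i))) \<le> 1/4" for i
    proof -
      have "l2norm (\<Phi>1 (chi (range s)) (U (x (s i)))) \<le> 2 * (1/8)"
      proof (rule P1.proj_range_subseq_norm_le[OF s(1) bop_l2[OF U xl2]])
        show "\<Phi>1 (chi {s i}) (U (x (s i))) = (\<lambda>_. 0)"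
          using xkill s(2)[of i] by (simp add: Kset_def)
        show "l2norm (\<Phi>1 (chi {..s j}) (U (x (s i)))) \<le> 1/8" if "i = Suc j" for j
          using before[of j] that by simp
        show "l2norm (\<Phi>1 (chi {s (Suc i)..}) (U (x (s i)))) \<le> 1/8" by (rule after)
      qed
      then show ?thesis by simp
    qed
  qed
qed

lemma intertwiner_residual_eq:
  assumes v2: "bop v2" and P2: "bop P2" and x: "x \<in> l2" "P2 x = x"
  shows "(\<lambda>n. v2 x n - v1 (P1 (adj v1 (v2 x))) n) = (\<lambda>n. v2 (P2 (defect v2 x)) n
    - opminus (v1 \<circ> P1 \<circ> adj v1) (v2 \<circ> P2 \<circ> adj v2) (v2 x) n)"
proof -
  have d: "defect v2 x \<in> l2" by (rule bop_l2[OF bop_defect[OF v2] x(1)])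
  have "P2 (adj v2 (v2 x)) = (\<lambda>n. x n - P2 (defect v2 x) n)"
    using adj_comp_eq_diff_defect[OF v2 x(1)] bop_diff[OF P2 x(1) d] x(2) by simp
  then have "v2 (P2 (adj v2 (v2 x))) = (\<lambda>n. v2 x n - v2 (P2 (defect v2 x)) n)"
    using bop_diff[OF v2 x(1) bop_l2[OF P2 d]] by simp
  then show ?thesis by (simp add: opminus_def fun_eq_iff)
qed

lemma compact_intertwiner_residual_tendsto_0:
  assumes v1: "bop v1" and v2: "bop v2" "finite_rank (defect v2)" and P1: "bop P1" and P2: "bop P2"
    and K: "compact_op (opminus (v1 \<circ> P1 \<circ> adj v1) (v2 \<circ> P2 \<circ> adj v2))"
    and X: "weakly_null X" "\<And>i. l2norm (X i) \<le> 1" "\<And>i. P2 (X i) = X i"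
  shows "(\<lambda>i. l2norm (\<lambda>n. v2 (X i) n - v1 (P1 (adj v1 (v2 (X i)))) n)) \<longlonglongrightarrow> 0"
proof -
  define T where "T = opminus (v1 \<circ> P1 \<circ> adj v1) (v2 \<circ> P2 \<circ> adj v2)"
  define E where "E i = v2 (P2 (defect v2 (X i)))" for i
  have T: "bop T" unfolding T_def by (intro bop_opminus bop_comp bop_adj v1 v2(1) P1 P2)
  have Xl2: "X i \<in> l2" for i using X(1) by (simp add: weakly_null_def)
  have dl2: "defect v2 (X i) \<in> l2" for i by (rule bop_l2[OF bop_defect[OF v2(1)] Xl2])
  have El2: "E i \<in> l2" for i unfolding E_def by (intro bop_l2[OF v2(1)] bop_l2[OF P2] dl2)
  have TYl2: "T (v2 (X i)) \<in> l2" for i by (intro bop_l2[OF T] bop_l2[OF v2(1)] Xl2)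
  have "compact_op T" using K by (simp add: T_def)
  moreover obtain C where "\<And>i. l2norm (v2 (X i)) \<le> C"
    by (rule bop_image_bounded[of v2 X, OF v2(1) Xl2 X(2)]) blast
  ultimately have "(\<lambda>i. l2norm (T (v2 (X i)))) \<longlonglongrightarrow> 0"
    by (rule compact_op_weakly_null_tendsto_0[OF T _ weakly_null_bop[OF v2(1) X(1)]])
  moreover have "(\<lambda>i. l2norm (E i)) \<longlonglongrightarrow> 0"
    using bop_norm_tendsto_0[OF bop_comp[OF v2(1) P2] dl2
        finite_rank_weakly_null_tendsto_0[OF bop_defect[OF v2(1)] v2(2) X(1)]]
    by (simp add: E_def)
  ultimately have lim: "(\<lambda>i. l2norm (E i) + l2norm (T (v2 (X i)))) \<longlonglongrightarrow> 0"
    using tendsto_add by fastforce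
  have "norm (l2norm (\<lambda>n. v2 (X i) n - v1 (P1 (adj v1 (v2 (X i)))) n))
      \<le> l2norm (E i) + l2norm (T (v2 (X i)))" for i
    unfolding intertwiner_residual_eq[OF v2(1) P2 Xl2 X(3)] E_def[symmetric] T_def[symmetric]
    using l2_diff(2)[OF El2 TYl2] l2norm_nonneg[OF l2_diff(1)[OF El2 TYl2]] by simp
  then have "eventually (\<lambda>i. norm (l2norm (\<lambda>n. v2 (X i) n - v1 (P1 (adj v1 (v2 (X i)))) n))
      \<le> l2norm (E i) + l2norm (T (v2 (X i)))) sequentially"
    by simp
  from this lim show ?thesis by (rule tendsto_0_if_eventually_norm_le)
qed

lemma l2norm_diff_ge_if_defects_small:
  assumes v1: "bop v1" and v2: "bop v2"
    and x: "x \<in> l2" "l2norm x = 1" "l2norm (defect v2 x) < 7/16"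
    and w: "w \<in> l2" "l2norm w \<le> 1/4" "l2norm (defect v1 w) < 1/4"
  shows "1/4 \<le> l2norm (\<lambda>n. v2 x n - v1 w n)"
proof -
  have "(l2norm (v1 w))\<^sup>2 \<le> (l2norm w)\<^sup>2 + l2norm w * l2norm (defect v1 w)"
    by (rule l2norm_sq_bounds_defect(2)[OF v1 w(1)])
  also have "\<dots> \<le> (1/4)\<^sup>2 + 1/4 * (1/4)"
    using w l2norm_nonneg[OF w(1)] l2norm_nonneg[OF bop_l2[OF bop_defect[OF v1] w(1)]]
    by (intro add_mono power_mono mult_mono) auto
  finally have "(l2norm (v1 w))\<^sup>2 < (1/2)\<^sup>2" by (simp add: power2_eq_square)
  then have v1w: "l2norm (v1 w) < 1/2" by (rule power2_less_imp_less) simp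
  have "(3/4)\<^sup>2 \<le> (l2norm (v2 x))\<^sup>2"
    using l2norm_sq_bounds_defect(1)[OF v2 x(1)] x(2,3) by (simp add: power2_eq_square)
  then have "3/4 \<le> l2norm (v2 x)"
    by (rule power2_le_imp_le) (rule l2norm_nonneg[OF bop_l2[OF v2 x(1)]])
  moreover have "l2norm (v2 x) \<le> l2norm (v1 w) + l2norm (\<lambda>n. v2 x n - v1 w n)"
    using l2_add(2)[OF bop_l2[OF v1 w(1)] l2_diff(1)[OF bop_l2[OF v2 x(1)] bop_l2[OF v1 w(1)]]]
    by simp
  ultimately show ?thesis using v1w by simp
qed

lemma no_compressed_weakly_null_unit_sequence:
  assumes v1: "bop v1" "finite_rank (defect v1)" and v2: "bop v2" "finite_rank (defect v2)"
    and P1: "bop P1" and P2: "bop P2"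
    and K: "compact_op (opminus (v1 \<circ> P1 \<circ> adj v1) (v2 \<circ> P2 \<circ> adj v2))"
    and X: "weakly_null X" "\<And>i. l2norm (X i) = 1" "\<And>i. P2 (X i) = X i"
    and compressed: "\<And>i. l2norm (P1 (adj v1 (v2 (X i)))) \<le> 1/4"
  shows False
proof -
  define W where "W i = P1 (adj v1 (v2 (X i)))" for i
  have Xl2: "X i \<in> l2" for i using X(1) by (simp add: weakly_null_def)
  have Wl2: "W i \<in> l2" for i
    unfolding W_def by (intro bop_l2[OF P1] bop_l2[OF bop_adj[OF v1(1)]] bop_l2[OF v2(1)] Xl2)
  have "weakly_null W"
    using weakly_null_bop[OF bop_comp[OF P1 bop_comp[OF bop_adj[OF v1(1)] v2(1)]] X(1)]
    by (simp add: W_def[abs_def] o_def)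
  from finite_rank_weakly_null_tendsto_0[OF bop_defect[OF v1(1)] v1(2) this]
  have "eventually (\<lambda>i. l2norm (defect v1 (W i)) < 1/4) sequentially"
    by (rule order_tendstoD) simp
  moreover have "eventually (\<lambda>i. l2norm (defect v2 (X i)) < 7/16) sequentially"
    using finite_rank_weakly_null_tendsto_0[OF bop_defect[OF v2(1)] v2(2) X(1)]
    by (rule order_tendstoD) simp
  moreover have "(\<lambda>i. l2norm (\<lambda>n. v2 (X i) n - v1 (W i) n)) \<longlonglongrightarrow> 0"
    using compact_intertwiner_residual_tendsto_0[OF v1(1) v2 P1 P2 K X(1) _ X(3)] X(2)
    by (simp add: W_def)
  then have "eventually (\<lambda>i. l2norm (\<lambda>n. v2 (X i) n - v1 (W i) n) < 1/4) sequentially"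
    by (rule order_tendstoD) simp
  ultimately have "eventually (\<lambda>i. False) sequentially"
  proof eventually_elim
    case (elim i)
    have "1/4 \<le> l2norm (\<lambda>n. v2 (X i) n - v1 (W i) n)"
      using compressed[of i] unfolding W_def[symmetric]
      by (rule l2norm_diff_ge_if_defects_small[OF v1(1) v2(1) Xl2 X(2) elim(2) Wl2 _ elim(1)])
    with elim(3) show False by simp
  qed
  then show False by (simp add: eventually_sequentially)
qed

lemma rk_eventually_le:
  assumes \<Phi>1: "strong_star_rep \<Phi>1" and \<Phi>2: "strong_star_rep \<Phi>2"
    and compact1: "\<forall>a\<in>c0. compact_op (\<Phi>1 a)"
    and v1: "bop v1" "finite_rank (defect v1)" and v2: "bop v2" "finite_rank (defect v2)"
    and K: "\<forall>a\<in>linf. compact_op (opminus (v1 \<circ> \<Phi>1 a \<circ> adj v1) (v2 \<circ> \<Phi>2 a \<circ> adj v2))"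
  shows "\<exists>N. \<forall>k\<ge>N. rk (\<Phi>2 (Pk k)) \<le> rk (\<Phi>1 (Pk k))"
proof (rule ccontr)
  interpret P1: strong_star_rep \<Phi>1 by (rule \<Phi>1)
  interpret P2: strong_star_rep \<Phi>2 by (rule \<Phi>2)
  assume "\<not> ?thesis"
  then have frequent: "\<exists>k\<ge>N. rk (\<Phi>1 (chi {k})) < rk (\<Phi>2 (chi {k}))" for N
    by (auto simp: Pk_chi not_le)
  obtain X S where X: "weakly_null X" "\<And>i. l2norm (X i) = 1" "\<And>i. \<Phi>2 (chi S) (X i) = X i"
    and compressed: "\<And>i. l2norm (\<Phi>1 (chi S) ((adj v1 \<circ> v2) (X i))) \<le> 1/4"
    by (rule compressed_unit_sequence_if_rk_frequently_less[OF \<Phi>1 compact1 \<Phi>2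
          bop_comp[OF bop_adj[OF v1(1)] v2(1)] frequent]) blast
  show False
    using no_compressed_weakly_null_unit_sequence[OF v1 v2 P1.bop_proj[of S] P2.bop_proj[of S]
        K[rule_format, OF chi_linf] X] compressed
    by simp
qed

theorem lemma3p2:
  fixes \<Phi>1 \<Phi>2 :: "vec \<Rightarrow> op" and v1 v2 :: op
  assumes "strongly_continuous \<Phi>1" and "strongly_continuous \<Phi>2"
    and "unital_star_hom \<Phi>1" and "unital_star_hom \<Phi>2"
    and "\<forall>a\<in>c0. compact_op (\<Phi>1 a)" and "\<forall>a\<in>c0. compact_op (\<Phi>2 a)"
    and "finite_index_pi v1" and "finite_index_pi v2"
    and "\<forall>a\<in>linf. compact_op (opminus (v1 \<circ> \<Phi>1 a \<circ> adj v1) (v2 \<circ> \<Phi>2 a \<circ> adj v2))"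
  shows "\<exists>N. \<forall>k\<ge>N. rk (\<Phi>1 (Pk k)) = rk (\<Phi>2 (Pk k))"
proof -
  have \<Phi>1: "strong_star_rep \<Phi>1" and \<Phi>2: "strong_star_rep \<Phi>2"
    using assms(1-4) by (simp_all add: strong_star_rep_def strong_star_rep_axioms_def star_rep_def)
  note v1 = finite_index_pi_bop_defect[OF assms(7)]
  note v2 = finite_index_pi_bop_defect[OF assms(8)]
  obtain N1 where "\<forall>k\<ge>N1. rk (\<Phi>2 (Pk k)) \<le> rk (\<Phi>1 (Pk k))"
    using rk_eventually_le[OF \<Phi>1 \<Phi>2 assms(5) v1 v2 assms(9)] by blast
  moreover obtain N2 where "\<forall>k\<ge>N2. rk (\<Phi>1 (Pk k)) \<le> rk (\<Phi>2 (Pk k))"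
    using rk_eventually_le[OF \<Phi>2 \<Phi>1 assms(6) v2 v1] assms(9) compact_op_opminus_commute by blast
  ultimately have "\<forall>k\<ge>max N1 N2. rk (\<Phi>1 (Pk k)) = rk (\<Phi>2 (Pk k))"
    by (simp add: order_antisym)
  then show ?thesis by blast
qed

end
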